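(* Let $\{w^k\}$ be generated by the L-GADMM iteration and $\{\bar w^k\}$ be the auxiliary sequence. For any integer $t>0$ let $w_t=\frac1{t+1}\sum_{k=0}^t\bar w^k$ and let $u_t$ be its $u$-part (its first $m$ blocks). Then $w_t\in\mathcal{W}$ and $$\theta(u_t)-\theta(u)+(w_t-w)^\top F(w)\le\frac{1}{2(t+1)}\|w-w^0\|_H^2\qquad\forall w\in\mathcal{W}.$$
   Context: Standing setting. Let $m\ge 2$, $\ell$, $n_1,\dots,n_m$ be positive integers. For $i=1,\dots,m$ let $\theta_i:\mathbb{R}^{n_i}\to\mathbb{R}$ be convex, $\mathcal{X}_i\subseteq\mathbb{R}^{n_i}$ nonempty closed convex, $A_i\in\mathbb{R}^{\ell\times n_i}$ of full column rank, and $b\in\mathbb{R}^\ell$. Problem (P): $\min\{\sum_{i=1}^m\theta_i(x_i):\sum_{i=1}^mA_ix_i=b,\ x_i\in\mathcal{X}_i\}$, assumed to have a nonempty solution set. Write $u=(x_1,\dots,x_m)$, $w=(x_1,\dots,x_m,y)$ with $y\in\mathbb{R}^\ell$, $\theta(u)=\sum_i\theta_i(x_i)$, $F(w)=(-A_1^\top y,\dots,-A_m^\top y,\ \sum_iA_ix_i-b)$, $\mathcal{W}=\mathcal{X}_1\times\cdots\times\mathcal{X}_m\times\mathbb{R}^\ell$, and $\mathcal{W}^*=\{w^*\in\mathcal{W}:\theta(u)-\theta(u^* )+(w-w^* )^\top F(w^* )\ge0\ \forall w\in\mathcal{W}\}$ (nonempty). For symmetric $G$, $\|v\|_G^2:=v^\top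 Gv$; $\|\cdot\|$ is the Euclidean norm. Vectors are partitioned as $w=(R,x_m,y)$ with $R=(x_1,\dots,x_{m-1})$. Parameters: $\rho>0$, $\gamma\in(0,2)$, symmetric positive definite $P_i\in\mathbb{R}^{n_i\times n_i}$ ($i=1,\dots,m$) such that $G_1\succ0$, where $G_1$ is the symmetric block matrix with diagonal blocks $P_1,\dots,P_{m-1}$ and $(i,j)$ block $-\rho A_i^\top A_j$ for $i\ne j$, $1\le i,j\le m-1$. Matrices (w.r.t. the partition $(R,x_m,y)$): $Q=\begin{pmatrix}G_1&0&0\\0&\rho A_m^\top A_m+P_m&(1-\gamma)A_m^\top\\0&-A_m&\frac1\rho I_\ell\end{pmatrix}$, $M=\begin{pmatrix}I&0&0\\0&I_{n_m}&0\\0&-\rho A_m&\gamma I_\ell\end{pmatrix}$, $H=\begin{pmatrix}G_1&0&0\\0&P_m+\frac\rho\gamma A_m^\top A_m&\frac{1-\gamma}\gamma A_m^\top\\0&\frac{1-\gamma}\gamma A_m&\frac1{\gamma\rho}I_\ell\end{pmatrix}$, $N=Q^\top+Q-M^\top HM$. L-GADMM iteration: from an arbitrary $w^0=(x_1^0,\dots,x_m^0,y^0)\in\mathcal{W}$, for $k=0,1,2,\dots$: $x_j^{k+1}=\arg\min_{x_j\in\mathcal{X}_j}\{\theta_j(x_j)+\frac\rho2\|A_jx_j+\sum_{i=1,i\ne j}^mA_ix_i^k-b-\frac{y^k}\rho\|^2+\frac12\|x_j-x_j^k\|_{P_j}^2\}$ for $j=1,\dots,m-1$; $x_m^{k+1}=\arg\min_{x_m\in\mathcal{X}_m}\{\theta_m(x_m)+\frac\rho2\|\gamma\sum_{i=1}^{m-1}A_ix_i^{k+1}+(1-\gamma)(b-A_mx_m^k)+A_mx_m-b-\frac{y^k}\rho\|^2+\frac12\|x_m-x_m^k\|_{P_m}^2\}$;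 $y^{k+1}=y^k-\rho\big(\gamma\sum_{i=1}^{m-1}A_ix_i^{k+1}+(1-\gamma)(b-A_mx_m^k)+A_mx_m^{k+1}-b\big)$. Auxiliary sequence: $\bar w^k=(\bar x_1^k,\dots,\bar x_m^k,\bar y^k)$ with $\bar x_i^k=x_i^{k+1}$ ($i=1,\dots,m$) and $\bar y^k=y^k-\rho(\sum_{i=1}^{m-1}A_ix_i^{k+1}+A_mx_m^k-b)$; $\bar u^k=(\bar x_1^k,\dots,\bar x_m^k)$, $R^k=(x_1^k,\dots,x_{m-1}^k)$, $\bar R^k=(\bar x_1^k,\dots,\bar x_{m-1}^k)$. *)

theory Defs
  imports "Jordan_Normal_Form.DL_Rank"
begin

text \<open>Vectors of varying dimension are Jordan_Normal_Form vectors (real vec);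
 block indices range over {1..m}.\<close>

definition vsum :: "nat \<Rightarrow> (nat \<Rightarrow> real vec) \<Rightarrow> nat set \<Rightarrow> real vec" where
  "vsum l f I = vec l (\<lambda>j. \<Sum>i\<in>I. f i $ j)"

definition sqn :: "real vec \<Rightarrow> real" where
  "sqn v = v \<bullet> v"

definition quad :: "real mat \<Rightarrow> real vec \<Rightarrow> real" where
  "quad G v = v \<bullet> (G *\<^sub>v v)"

definition convex_fun_vec :: "nat \<Rightarrow> (real vec \<Rightarrow> real) \<Rightarrow> bool" where
  "convex_fun_vec n f = (\<forall>x\<in>carrier_vec n. \<forall>z\<in>carrier_vec n. \<forall>t::real. 0 \<le> t \<and> t \<le> 1 \<longrightarrow>
      f (t \<cdot>\<^sub>v x + (1 - t) \<cdot>\<^sub>v z) \<le> t * f x + (1 - t) * f z)"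

definition convex_set_vec :: "nat \<Rightarrow> real vec set \<Rightarrow> bool" where
  "convex_set_vec n X = (X \<subseteq> carrier_vec n \<and> (\<forall>x\<in>X. \<forall>z\<in>X. \<forall>t::real. 0 \<le> t \<and> t \<le> 1 \<longrightarrow>
      t \<cdot>\<^sub>v x + (1 - t) \<cdot>\<^sub>v z \<in> X))"

definition closed_set_vec :: "nat \<Rightarrow> real vec set \<Rightarrow> bool" where
  "closed_set_vec n X = (X \<subseteq> carrier_vec n \<and> (\<forall>s z. (\<forall>k. s k \<in> X) \<longrightarrow> z \<in> carrier_vec n \<longrightarrow>
      (\<forall>j<n. (\<lambda>k. s k $ j) \<longlonglongrightarrow> z $ j) \<longrightarrow> z \<in> X))"

definition full_column_rank :: "nat \<Rightarrow> nat \<Rightarrow> real mat \<Rightarrow> bool" where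
  "full_column_rank l n A = (A \<in> carrier_mat l n \<and> vec_space.rank l A = n)"

definition sym_pos_def :: "nat \<Rightarrow> real mat \<Rightarrow> bool" where
  "sym_pos_def n P = (P \<in> carrier_mat n n \<and> transpose_mat P = P \<and>
      (\<forall>v\<in>carrier_vec n. v \<noteq> 0\<^sub>v n \<longrightarrow> quad P v > 0))"

text \<open>Quadratic form of the block matrix G_1 (diagonal blocks P_i, off-diagonal blocks
 -rho A_i^T A_j, i,j in {1..m-1}) evaluated at R = (x_1,...,x_{m-1}).\<close>
definition G1_quad :: "nat \<Rightarrow> real \<Rightarrow> (nat \<Rightarrow> real mat) \<Rightarrow> (nat \<Rightarrow> real mat) \<Rightarrow> (nat \<Rightarrow> real vec) \<Rightarrow> real" where
  "G1_quad m \<rho> A P R =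
     (\<Sum>i\<in>{1..<m}. R i \<bullet> (P i *\<^sub>v R i))
     + (\<Sum>i\<in>{1..<m}. \<Sum>j\<in>{1..<m} - {i}. R i \<bullet> (((- \<rho>) \<cdot>\<^sub>m (transpose_mat (A i) * A j)) *\<^sub>v R j))"

definition G1_pos_def :: "nat \<Rightarrow> (nat \<Rightarrow> nat) \<Rightarrow> real \<Rightarrow> (nat \<Rightarrow> real mat) \<Rightarrow> (nat \<Rightarrow> real mat) \<Rightarrow> bool" where
  "G1_pos_def m n \<rho> A P = (\<forall>R. (\<forall>i\<in>{1..<m}. R i \<in> carrier_vec (n i)) \<longrightarrow>
      (\<exists>i\<in>{1..<m}. R i \<noteq> 0\<^sub>v (n i)) \<longrightarrow> G1_quad m \<rho> A P R > 0)"

text \<open>||w||_H^2 for w = (R, x_m, y), H the block matrix from the paper.\<close>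
definition H_quad :: "nat \<Rightarrow> real \<Rightarrow> real \<Rightarrow> (nat \<Rightarrow> real mat) \<Rightarrow> (nat \<Rightarrow> real mat) \<Rightarrow> (nat \<Rightarrow> real vec) \<Rightarrow> real vec \<Rightarrow> real" where
  "H_quad m \<rho> \<gamma> A P u y =
     G1_quad m \<rho> A P u
     + u m \<bullet> ((P m + (\<rho> / \<gamma>) \<cdot>\<^sub>m (transpose_mat (A m) * A m)) *\<^sub>v u m)
     + u m \<bullet> ((((1 - \<gamma>) / \<gamma>) \<cdot>\<^sub>m transpose_mat (A m)) *\<^sub>v y)
     + y \<bullet> ((((1 - \<gamma>) / \<gamma>) \<cdot>\<^sub>m A m) *\<^sub>v u m)
     + y \<bullet> ((1 / (\<gamma> * \<rho>)) \<cdot>\<^sub>v y)"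

definition theta_sum :: "nat \<Rightarrow> (nat \<Rightarrow> real vec \<Rightarrow> real) \<Rightarrow> (nat \<Rightarrow> real vec) \<Rightarrow> real" where
  "theta_sum m \<theta> u = (\<Sum>i\<in>{1..m}. \<theta> i (u i))"

text \<open>theta(u) - theta(u') + (w - w')^T F(w') with w = (u,y), w' = (u',y').\<close>
definition vi_gap :: "nat \<Rightarrow> nat \<Rightarrow> (nat \<Rightarrow> real vec \<Rightarrow> real) \<Rightarrow> (nat \<Rightarrow> real mat) \<Rightarrow> real vec
     \<Rightarrow> (nat \<Rightarrow> real vec) \<Rightarrow> real vec \<Rightarrow> (nat \<Rightarrow> real vec) \<Rightarrow> real vec \<Rightarrow> real" where
  "vi_gap m l \<theta> A b u y u' y' =
     theta_sum m \<theta> u - theta_sum m \<theta> u'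
     + (\<Sum>i\<in>{1..m}. (u i - u' i) \<bullet> (- (transpose_mat (A i) *\<^sub>v y')))
     + (y - y') \<bullet> (vsum l (\<lambda>i. A i *\<^sub>v u' i) {1..m} - b)"

definition in_W :: "nat \<Rightarrow> nat \<Rightarrow> (nat \<Rightarrow> real vec set) \<Rightarrow> (nat \<Rightarrow> real vec) \<Rightarrow> real vec \<Rightarrow> bool" where
  "in_W m l X u y = ((\<forall>i\<in>{1..m}. u i \<in> X i) \<and> y \<in> carrier_vec l)"

definition sub_obj :: "nat \<Rightarrow> nat \<Rightarrow> real \<Rightarrow> (nat \<Rightarrow> real vec \<Rightarrow> real) \<Rightarrow> (nat \<Rightarrow> real mat) \<Rightarrow> real vec
     \<Rightarrow> (nat \<Rightarrow> real mat) \<Rightarrow> (nat \<Rightarrow> real vec) \<Rightarrow> real vec \<Rightarrow> nat \<Rightarrow> real vec \<Rightarrow> real" where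
  "sub_obj m l \<rho> \<theta> A b P xk yk j z =
     \<theta> j z + \<rho> / 2 * sqn (A j *\<^sub>v z + vsum l (\<lambda>i. A i *\<^sub>v xk i) ({1..m} - {j}) - b - (1 / \<rho>) \<cdot>\<^sub>v yk)
     + 1 / 2 * quad (P j) (z - xk j)"

definition sub_obj_m :: "nat \<Rightarrow> nat \<Rightarrow> real \<Rightarrow> real \<Rightarrow> (nat \<Rightarrow> real vec \<Rightarrow> real) \<Rightarrow> (nat \<Rightarrow> real mat) \<Rightarrow> real vec
     \<Rightarrow> (nat \<Rightarrow> real mat) \<Rightarrow> (nat \<Rightarrow> real vec) \<Rightarrow> real vec \<Rightarrow> real vec \<Rightarrow> real vec \<Rightarrow> real" where
  "sub_obj_m m l \<rho> \<gamma> \<theta> A b P xn xmk yk z =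
     \<theta> m z + \<rho> / 2 * sqn (\<gamma> \<cdot>\<^sub>v vsum l (\<lambda>i. A i *\<^sub>v xn i) {1..<m} + (1 - \<gamma>) \<cdot>\<^sub>v (b - A m *\<^sub>v xmk)
        + A m *\<^sub>v z - b - (1 / \<rho>) \<cdot>\<^sub>v yk)
     + 1 / 2 * quad (P m) (z - xmk)"

definition is_argmin :: "real vec set \<Rightarrow> (real vec \<Rightarrow> real) \<Rightarrow> real vec \<Rightarrow> bool" where
  "is_argmin X f z = (z \<in> X \<and> (\<forall>z'\<in>X. f z \<le> f z'))"

text \<open>The L-GADMM sequence: x k i = x_i^k, y k = y^k.\<close>
definition lgadmm_seq :: "nat \<Rightarrow> nat \<Rightarrow> real \<Rightarrow> real \<Rightarrow> (nat \<Rightarrow> real vec \<Rightarrow> real) \<Rightarrow> (nat \<Rightarrow> real vec set)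
     \<Rightarrow> (nat \<Rightarrow> real mat) \<Rightarrow> real vec \<Rightarrow> (nat \<Rightarrow> real mat)
     \<Rightarrow> (nat \<Rightarrow> nat \<Rightarrow> real vec) \<Rightarrow> (nat \<Rightarrow> real vec) \<Rightarrow> bool" where
  "lgadmm_seq m l \<rho> \<gamma> \<theta> X A b P x y =
     (in_W m l X (x 0) (y 0) \<and>
      (\<forall>k. (\<forall>j\<in>{1..<m}. is_argmin (X j) (sub_obj m l \<rho> \<theta> A b P (x k) (y k) j) (x (Suc k) j))
         \<and> is_argmin (X m) (sub_obj_m m l \<rho> \<gamma> \<theta> A b P (x (Suc k)) (x k m) (y k)) (x (Suc k) m)
         \<and> y (Suc k) = y k - \<rho> \<cdot>\<^sub>v (\<gamma> \<cdot>\<^sub>v vsum l (\<lambda>i. A i *\<^sub>v x (Suc k) i) {1..<m}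
              + (1 - \<gamma>) \<cdot>\<^sub>v (b - A m *\<^sub>v x k m) + A m *\<^sub>v x (Suc k) m - b)))"

definition ybar :: "nat \<Rightarrow> nat \<Rightarrow> real \<Rightarrow> (nat \<Rightarrow> real mat) \<Rightarrow> real vec
     \<Rightarrow> (nat \<Rightarrow> nat \<Rightarrow> real vec) \<Rightarrow> (nat \<Rightarrow> real vec) \<Rightarrow> nat \<Rightarrow> real vec" where
  "ybar m l \<rho> A b x y k = y k - \<rho> \<cdot>\<^sub>v (vsum l (\<lambda>i. A i *\<^sub>v x (Suc k) i) {1..<m} + A m *\<^sub>v x k m - b)"

end

theory Submission
  imports Defs
begin

(*
  Each subproblem of L-GADMM is a linearised proximal step, so its minimiser satisfies a
  variational inequality. Adding these inequalities over the blocks and rewriting the linear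
  terms with the multiplier updates bounds the gap at the auxiliary point wbar^k by
  1/2 (||w - w^k||_H^2 - ||w - w^(k+1)||_H^2): the three-point identities of the quadratic forms
  produce the telescoping terms, and what is left over is nonnegative because G_1 and P_m are
  positive definite and gamma < 2. Summing over k = 0..t and using that the gap is convex in its
  first argument (Jensen for theta, linearity for the rest) gives the ergodic estimate.
*)

section \<open>Vectors, matrices and quadratic forms\<close>

lemma mult_mat_vec_smult_mat:
  fixes M :: "real mat"
  assumes "M \<in> carrier_mat nr nc" "v \<in> carrier_vec nc"
  shows "(c \<cdot>\<^sub>m M) *\<^sub>v v = c \<cdot>\<^sub>v (M *\<^sub>v v)"
  using assms by (intro eq_vecI) (auto simp: scalar_prod_def sum_distrib_left mult.assoc)

lemma scalar_prod_transpose_mat: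
  fixes A :: "real mat"
  assumes A: "A \<in> carrier_mat l n" and u: "u \<in> carrier_vec n" and y: "y \<in> carrier_vec l"
  shows "u \<bullet> (transpose_mat A *\<^sub>v y) = (A *\<^sub>v u) \<bullet> y"
proof -
  have "u \<bullet> (transpose_mat A *\<^sub>v y) = (transpose_mat A *\<^sub>v y) \<bullet> u"
    using A u y by (intro comm_scalar_prod[of _ n]) auto
  also have "\<dots> = y \<bullet> (A *\<^sub>v u)" by (rule transpose_vec_mult_scalar[OF A u y])
  also have "\<dots> = (A *\<^sub>v u) \<bullet> y" using A u y by (intro comm_scalar_prod[of _ l]) auto
  finally show ?thesis .
qed

lemma scalar_prod_sym_mat_commute:
  fixes P :: "real mat"
  assumes P: "P \<in> carrier_mat n n" "transpose_mat P = P" and r: "r \<in> carrier_vec n" and d: "d \<in> carrier_vec n"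
  shows "r \<bullet> (P *\<^sub>v d) = d \<bullet> (P *\<^sub>v r)"
proof -
  have "r \<bullet> (P *\<^sub>v d) = r \<bullet> (transpose_mat P *\<^sub>v d)" using P by simp
  also have "\<dots> = (P *\<^sub>v r) \<bullet> d" by (rule scalar_prod_transpose_mat[OF P(1) r d])
  also have "\<dots> = d \<bullet> (P *\<^sub>v r)" using P r d by (intro comm_scalar_prod[of _ n]) auto
  finally show ?thesis .
qed

lemma scalar_prod_eq_sum:
  "u \<in> carrier_vec l \<Longrightarrow> v \<in> carrier_vec l \<Longrightarrow> u \<bullet> v = (\<Sum>i<l. u $ i * v $ i)"
  unfolding scalar_prod_def by (simp add: atLeast0LessThan)

lemma sqn_eq_sum: "u \<in> carrier_vec l \<Longrightarrow> sqn u = (\<Sum>i<l. u $ i * u $ i)"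
  unfolding sqn_def by (rule scalar_prod_eq_sum)

lemma scalar_prod_diff_uminus_swap:
  fixes a u w :: "real vec"
  assumes "a \<in> carrier_vec n" "u \<in> carrier_vec n" "w \<in> carrier_vec n"
  shows "(a - u) \<bullet> (- w) = (u - a) \<bullet> w"
  using assms by (simp add: scalar_prod_eq_sum[of _ n] algebra_simps)

lemma quad_add:
  assumes P: "P \<in> carrier_mat n n" "transpose_mat P = P" and r: "r \<in> carrier_vec n" and d: "d \<in> carrier_vec n"
  shows "quad P (r + d) = quad P r + 2 * (r \<bullet> (P *\<^sub>v d)) + quad P d"
proof -
  have "quad P (r + d) = r \<bullet> (P *\<^sub>v r) + r \<bullet> (P *\<^sub>v d) + (d \<bullet> (P *\<^sub>v r) + d \<bullet> (P *\<^sub>v d))"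
    unfolding quad_def using P r d
    by (simp add: mult_add_distrib_mat_vec add_scalar_prod_distrib[of r n d] scalar_prod_add_distrib[of _ n])
  also have "d \<bullet> (P *\<^sub>v r) = r \<bullet> (P *\<^sub>v d)" using scalar_prod_sym_mat_commute[OF P r d] ..
  finally show ?thesis unfolding quad_def by simp
qed

lemma quad_smult:
  assumes "P \<in> carrier_mat n n" "d \<in> carrier_vec n"
  shows "quad P (s \<cdot>\<^sub>v d) = s\<^sup>2 * quad P d"
  unfolding quad_def using assms by (simp add: mult_mat_vec power2_eq_square)

lemma sqn_add_smult:
  assumes "p \<in> carrier_vec l" "q \<in> carrier_vec l"
  shows "sqn (p + s \<cdot>\<^sub>v q) = sqn p + 2 * s * (p \<bullet> q) + s\<^sup>2 * sqn q"
  using assms unfolding sqn_def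
  by (simp add: add_scalar_prod_distrib[of _ l] scalar_prod_add_distrib[of _ l] comm_scalar_prod[of p l q]
      power2_eq_square algebra_simps)

lemma vsum_carrier [simp]: "vsum l f I \<in> carrier_vec l"
  and vsum_dim [simp]: "dim_vec (vsum l f I) = l"
  and vsum_index [simp]: "j < l \<Longrightarrow> vsum l f I $ j = (\<Sum>i\<in>I. f i $ j)"
  unfolding vsum_def by auto

lemma vsum_scalar_prod:
  assumes "\<forall>i\<in>I. f i \<in> carrier_vec l" "q \<in> carrier_vec l"
  shows "vsum l f I \<bullet> q = (\<Sum>i\<in>I. f i \<bullet> q)"
proof -
  have "vsum l f I \<bullet> q = (\<Sum>j\<in>{0..<l}. (\<Sum>i\<in>I. f i $ j) * q $ j)"
    using assms unfolding scalar_prod_def by simp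
  also have "\<dots> = (\<Sum>i\<in>I. \<Sum>j\<in>{0..<l}. f i $ j * q $ j)"
    by (simp add: sum_distrib_right sum.swap[of _ I])
  also have "\<dots> = (\<Sum>i\<in>I. f i \<bullet> q)"
    using assms unfolding scalar_prod_def by (intro sum.cong) auto
  finally show ?thesis .
qed

section \<open>Optimality of a proximal subproblem\<close>

lemma nonneg_if_small_quadratic_perturbations_nonneg:
  fixes G C :: real
  assumes "\<And>s. 0 < s \<Longrightarrow> s \<le> 1 \<Longrightarrow> 0 \<le> s * G + s\<^sup>2 * C"
  shows "0 \<le> G"
proof (rule ccontr)
  assume "\<not> 0 \<le> G"
  hence G: "G < 0" by simp
  define D where "D = 2 * (\<bar>C\<bar> + 1)"
  have D: "D > 0" unfolding D_def by simp
  define s where "s = min 1 (- G / D)"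
  have s: "0 < s" "s \<le> 1" using G D by (auto simp: s_def divide_neg_pos)
  have "s \<le> - G / D" by (simp add: s_def)
  hence "2 * s + 2 * (s * \<bar>C\<bar>) \<le> - G" using D unfolding D_def by (simp add: field_simps)
  moreover have "s * C \<le> s * \<bar>C\<bar>" using s by (simp add: mult_left_mono)
  ultimately have "G + s * C < 0" using s G by linarith
  hence "s * G + s\<^sup>2 * C < 0" using s
    by (metis mult_pos_neg power2_eq_square distrib_left mult.assoc)
  with assms[OF s] show False by simp
qed

text \<open>Compare \<open>zb\<close> with \<open>zb + s (z - zb)\<close>, \<open>0 < s \<le> 1\<close>, and let \<open>s \<rightarrow> 0\<close>.\<close>
lemma argmin_prox_variational_ineq:
  fixes A P :: "real mat" and \<theta> :: "real vec \<Rightarrow> real"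
  assumes th: "convex_fun_vec n \<theta>" and Xc: "convex_set_vec n X"
    and A: "A \<in> carrier_mat l n" and v: "v \<in> carrier_vec l"
    and P: "P \<in> carrier_mat n n" "transpose_mat P = P"
    and z0: "z0 \<in> carrier_vec n" and am: "is_argmin X f zb"
    and f: "\<And>z. z \<in> X \<Longrightarrow> f z = \<theta> z + \<rho> / 2 * sqn (A *\<^sub>v z + v) + 1 / 2 * quad P (z - z0)"
    and z: "z \<in> X"
  shows "0 \<le> \<theta> z - \<theta> zb + \<rho> * ((A *\<^sub>v zb + v) \<bullet> (A *\<^sub>v (z - zb))) + (zb - z0) \<bullet> (P *\<^sub>v (z - zb))"
proof -
  have Xsub: "X \<subseteq> carrier_vec n" using Xc unfolding convex_set_vec_def by auto
  have zbX: "zb \<in> X" and zbmin: "\<And>z'. z' \<in> X \<Longrightarrow> f zb \<le> f z'" using am unfolding is_argmin_def by auto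
  have zb: "zb \<in> carrier_vec n" and zc: "z \<in> carrier_vec n" using zbX z Xsub by auto
  define d where "d = z - zb"
  define p where "p = A *\<^sub>v zb + v"
  define q where "q = A *\<^sub>v d"
  define r where "r = zb - z0"
  have d: "d \<in> carrier_vec n" and p: "p \<in> carrier_vec l" and q: "q \<in> carrier_vec l" and r: "r \<in> carrier_vec n"
    using zb zc z0 A v by (auto simp: d_def p_def q_def r_def)
  have fzb: "f zb = \<theta> zb + \<rho> / 2 * sqn p + 1 / 2 * quad P r"
    using f[OF zbX] by (simp add: p_def r_def)
  have "0 \<le> s * (\<theta> z - \<theta> zb + \<rho> * (p \<bullet> q) + r \<bullet> (P *\<^sub>v d)) + s\<^sup>2 * (\<rho> / 2 * sqn q + 1 / 2 * quad P d)"
    if s: "0 < s" "s \<le> 1" for s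
  proof -
    define zs where "zs = zb + s \<cdot>\<^sub>v d"
    have zs_eq: "zs = s \<cdot>\<^sub>v z + (1 - s) \<cdot>\<^sub>v zb"
      unfolding zs_def d_def using zb zc by (intro eq_vecI) (auto simp: algebra_simps)
    have zsX: "zs \<in> X" using Xc z zbX s unfolding zs_eq convex_set_vec_def by auto
    have th_zs: "\<theta> zs \<le> s * \<theta> z + (1 - s) * \<theta> zb"
      using th zc zb s unfolding zs_eq convex_fun_vec_def by auto
    have Azs: "A *\<^sub>v zs + v = p + s \<cdot>\<^sub>v q"
      unfolding zs_def p_def q_def using A zb d v
      by (intro eq_vecI) (auto simp: mult_add_distrib_mat_vec mult_mat_vec)
    have zs_z0: "zs - z0 = r + s \<cdot>\<^sub>v d" unfolding zs_def r_def using zb z0 d by (intro eq_vecI) auto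
    have "quad P (r + s \<cdot>\<^sub>v d) = quad P r + 2 * (s * (r \<bullet> (P *\<^sub>v d))) + s\<^sup>2 * quad P d"
      using quad_add[OF P r, of "s \<cdot>\<^sub>v d"] quad_smult[OF P(1) d] P d r by (simp add: mult_mat_vec)
    hence "f zs = \<theta> zs + \<rho> / 2 * (sqn p + 2 * s * (p \<bullet> q) + s\<^sup>2 * sqn q)
        + 1 / 2 * (quad P r + 2 * (s * (r \<bullet> (P *\<^sub>v d))) + s\<^sup>2 * quad P d)"
      using f[OF zsX] Azs zs_z0 sqn_add_smult[OF p q] by simp
    moreover have "f zb \<le> f zs" using zbmin zsX by blast
    ultimately show ?thesis using fzb th_zs by (simp add: algebra_simps)
  qed
  hence "0 \<le> \<theta> z - \<theta> zb + \<rho> * (p \<bullet> q) + r \<bullet> (P *\<^sub>v d)"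
    by (rule nonneg_if_small_quadratic_perturbations_nonneg)
  thus ?thesis unfolding p_def q_def r_def d_def .
qed

section \<open>Averages\<close>

lemma average_insert:
  fixes v :: "nat \<Rightarrow> real vec"
  assumes F: "finite F" "F \<noteq> {}" "k \<notin> F" and v: "v k \<in> carrier_vec n"
  shows "(1 / real (card (insert k F))) \<cdot>\<^sub>v vsum n v (insert k F)
     = (1 / real (card F + 1)) \<cdot>\<^sub>v v k + (1 - 1 / real (card F + 1)) \<cdot>\<^sub>v ((1 / real (card F)) \<cdot>\<^sub>v vsum n v F)"
proof -
  have cF: "real (card F) > 0" using F by (simp add: card_gt_0_iff)
  have "1 / (c + 1) * (a + S) = 1 / (c + 1) * a + (1 - 1 / (c + 1)) * (1 / c * S)"
    if "c > 0" for a S c :: real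
  proof -
    have "1 - 1 / (c + 1) = c / (c + 1)" using that by (simp add: field_simps)
    thus ?thesis using that by (simp add: distrib_left)
  qed
  from this[OF cF] show ?thesis using F v by (intro eq_vecI) (auto simp: add.commute)
qed

lemma convex_set_vec_average:
  fixes v :: "nat \<Rightarrow> real vec"
  assumes X: "convex_set_vec n X" and K: "finite K" "K \<noteq> {}" and v: "\<forall>k\<in>K. v k \<in> X"
  shows "(1 / real (card K)) \<cdot>\<^sub>v vsum n v K \<in> X"
  using K v
proof (induction K rule: finite_ne_induct)
  case (singleton k)
  have "v k \<in> carrier_vec n" using X singleton unfolding convex_set_vec_def by auto
  hence "(1 / real (card {k})) \<cdot>\<^sub>v vsum n v {k} = v k" by (intro eq_vecI) auto
  thus ?case using singleton by simp
next
  case (insert k F)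
  have vk: "v k \<in> X" "v k \<in> carrier_vec n" using insert X unfolding convex_set_vec_def by auto
  have "(1 / real (card F)) \<cdot>\<^sub>v vsum n v F \<in> X" using insert by auto
  thus ?case unfolding average_insert[where F=F and k=k and v=v, OF insert(1,2,3) vk(2)]
    using X vk(1) unfolding convex_set_vec_def by simp
qed

lemma convex_fun_vec_jensen:
  fixes v :: "nat \<Rightarrow> real vec"
  assumes f: "convex_fun_vec n f" and K: "finite K" "K \<noteq> {}" and v: "\<forall>k\<in>K. v k \<in> carrier_vec n"
  shows "f ((1 / real (card K)) \<cdot>\<^sub>v vsum n v K) \<le> (1 / real (card K)) * (\<Sum>k\<in>K. f (v k))"
  using K v
proof (induction K rule: finite_ne_induct)
  case (singleton k)
  hence "(1 / real (card {k})) \<cdot>\<^sub>v vsum n v {k} = v k" by (intro eq_vecI) auto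
  thus ?case by simp
next
  case (insert k F)
  have vk: "v k \<in> carrier_vec n" using insert by auto
  have IH: "f ((1 / real (card F)) \<cdot>\<^sub>v vsum n v F) \<le> (1 / real (card F)) * (\<Sum>k\<in>F. f (v k))"
    using insert by auto
  have cF: "real (card F) > 0" using insert by (simp add: card_gt_0_iff)
  define t where "t = 1 / real (card F + 1)"
  have t: "0 \<le> t" "t \<le> 1" by (auto simp: t_def)
  have "f ((1 / real (card (insert k F))) \<cdot>\<^sub>v vsum n v (insert k F))
      \<le> t * f (v k) + (1 - t) * f ((1 / real (card F)) \<cdot>\<^sub>v vsum n v F)"
    unfolding average_insert[where F=F and k=k and v=v, OF insert(1,2,3) vk] t_def[symmetric]
    using f vk t unfolding convex_fun_vec_def by simp
  also have "\<dots> \<le> t * f (v k) + (1 - t) * ((1 / real (card F)) * (\<Sum>k\<in>F. f (v k)))"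
    using IH t by (intro add_left_mono mult_left_mono) auto
  also have "\<dots> = t * (f (v k) + (\<Sum>k\<in>F. f (v k)))"
  proof -
    have "(1 - t) * (1 / real (card F)) = t" unfolding t_def using cF by (simp add: field_simps)
    thus ?thesis by (metis distrib_left mult.assoc)
  qed
  also have "\<dots> = (1 / real (card (insert k F))) * (\<Sum>k\<in>insert k F. f (v k))"
    using insert by (simp add: t_def)
  finally show ?case .
qed

lemma scalar_prod_average:
  fixes v :: "nat \<Rightarrow> real vec"
  assumes K: "finite K" "K \<noteq> {}" and v: "\<forall>k\<in>K. v k \<in> carrier_vec n"
    and u: "u \<in> carrier_vec n" and w: "w \<in> carrier_vec n"
  shows "((1 / real (card K)) \<cdot>\<^sub>v vsum n v K - u) \<bullet> w = (1 / real (card K)) * (\<Sum>k\<in>K. (v k - u) \<bullet> w)"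
proof -
  have "((1 / real (card K)) \<cdot>\<^sub>v vsum n v K - u) \<bullet> w = 1 / real (card K) * (\<Sum>k\<in>K. v k \<bullet> w) - u \<bullet> w"
    using u w v by (simp add: minus_scalar_prod_distrib[of _ n] vsum_scalar_prod)
  moreover have "(\<Sum>k\<in>K. (v k - u) \<bullet> w) = (\<Sum>k\<in>K. v k \<bullet> w) - real (card K) * (u \<bullet> w)"
    using v u w by (simp add: minus_scalar_prod_distrib[of _ n] sum_subtractf)
  moreover have "real (card K) > 0" using K by (simp add: card_gt_0_iff)
  ultimately show ?thesis by (simp add: field_simps)
qed

lemma in_W_average:
  assumes X: "\<forall>i\<in>{1..m}. convex_set_vec (n i) (X i)" and K: "finite K" "K \<noteq> {}"
    and W: "\<forall>k\<in>K. in_W m l X (xs k) (ys k)"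
  shows "in_W m l X (\<lambda>i. (1 / real (card K)) \<cdot>\<^sub>v vsum (n i) (\<lambda>k. xs k i) K)
    ((1 / real (card K)) \<cdot>\<^sub>v vsum l ys K)"
  unfolding in_W_def
proof (intro conjI ballI)
  fix i assume "i \<in> {1..m}"
  thus "(1 / real (card K)) \<cdot>\<^sub>v vsum (n i) (\<lambda>k. xs k i) K \<in> X i"
    using X W unfolding in_W_def by (intro convex_set_vec_average[OF _ K]) auto
qed simp

text \<open>The gap function is convex in its first pair of arguments: \<open>\<theta>\<close> is convex and the
  remaining terms are affine.\<close>
lemma vi_gap_average_le:
  fixes xs :: "nat \<Rightarrow> nat \<Rightarrow> real vec" and ys :: "nat \<Rightarrow> real vec"
  assumes \<theta>: "\<forall>i\<in>{1..m}. convex_fun_vec (n i) (\<theta> i)" and A: "\<forall>i\<in>{1..m}. A i \<in> carrier_mat l (n i)"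
    and K: "finite K" "K \<noteq> {}"
    and xs: "\<forall>k\<in>K. \<forall>i\<in>{1..m}. xs k i \<in> carrier_vec (n i)" and ys: "\<forall>k\<in>K. ys k \<in> carrier_vec l"
    and u: "\<forall>i\<in>{1..m}. u i \<in> carrier_vec (n i)" and yv: "yv \<in> carrier_vec l" and b: "b \<in> carrier_vec l"
  shows "vi_gap m l \<theta> A b (\<lambda>i. (1 / real (card K)) \<cdot>\<^sub>v vsum (n i) (\<lambda>k. xs k i) K)
      ((1 / real (card K)) \<cdot>\<^sub>v vsum l ys K) u yv
    \<le> (1 / real (card K)) * (\<Sum>k\<in>K. vi_gap m l \<theta> A b (xs k) (ys k) u yv)"
proof -
  define c where "c = real (card K)"
  have c: "c > 0" using K by (simp add: c_def card_gt_0_iff)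
  let ?xa = "\<lambda>i. (1 / c) \<cdot>\<^sub>v vsum (n i) (\<lambda>k. xs k i) K"
  let ?L = "\<lambda>k i. (xs k i - u i) \<bullet> - (transpose_mat (A i) *\<^sub>v yv)"
  let ?r = "vsum l (\<lambda>i. A i *\<^sub>v u i) {1..m} - b"
  have "theta_sum m \<theta> ?xa \<le> (\<Sum>i\<in>{1..m}. (1 / c) * (\<Sum>k\<in>K. \<theta> i (xs k i)))"
    unfolding theta_sum_def c_def using \<theta> xs by (intro sum_mono convex_fun_vec_jensen[OF _ K]) auto
  also have "\<dots> = (1 / c) * (\<Sum>k\<in>K. theta_sum m \<theta> (xs k))"
    unfolding theta_sum_def sum_distrib_left[symmetric] by (subst sum.swap) simp
  finally have \<theta>_avg: "theta_sum m \<theta> ?xa \<le> (1 / c) * (\<Sum>k\<in>K. theta_sum m \<theta> (xs k))" .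
  have "- (transpose_mat (A i) *\<^sub>v yv) \<in> carrier_vec (n i)" if "i \<in> {1..m}" for i
  proof -
    have "A i \<in> carrier_mat l (n i)" using A that by auto
    thus ?thesis using yv by auto
  qed
  hence "(\<Sum>i\<in>{1..m}. (?xa i - u i) \<bullet> - (transpose_mat (A i) *\<^sub>v yv))
      = (\<Sum>i\<in>{1..m}. (1 / c) * (\<Sum>k\<in>K. ?L k i))"
    unfolding c_def using xs u by (intro sum.cong refl scalar_prod_average[OF K]) auto
  also have "\<dots> = (1 / c) * (\<Sum>k\<in>K. \<Sum>i\<in>{1..m}. ?L k i)"
    unfolding sum_distrib_left[symmetric] by (subst sum.swap) simp
  finally have x_avg: "(\<Sum>i\<in>{1..m}. (?xa i - u i) \<bullet> - (transpose_mat (A i) *\<^sub>v yv))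
      = (1 / c) * (\<Sum>k\<in>K. \<Sum>i\<in>{1..m}. ?L k i)" .
  have y_avg: "((1 / c) \<cdot>\<^sub>v vsum l ys K - yv) \<bullet> ?r = (1 / c) * (\<Sum>k\<in>K. (ys k - yv) \<bullet> ?r)"
    unfolding c_def using ys yv b by (intro scalar_prod_average[OF K]) auto
  have "vi_gap m l \<theta> A b ?xa ((1 / c) \<cdot>\<^sub>v vsum l ys K) u yv
     \<le> (1 / c) * (\<Sum>k\<in>K. theta_sum m \<theta> (xs k)) - theta_sum m \<theta> u
        + (1 / c) * (\<Sum>k\<in>K. \<Sum>i\<in>{1..m}. ?L k i) + (1 / c) * (\<Sum>k\<in>K. (ys k - yv) \<bullet> ?r)"
    unfolding vi_gap_def x_avg y_avg using \<theta>_avg by linarith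
  also have "\<dots> = (1 / c) * ((\<Sum>k\<in>K. theta_sum m \<theta> (xs k)) - c * theta_sum m \<theta> u
        + (\<Sum>k\<in>K. \<Sum>i\<in>{1..m}. ?L k i) + (\<Sum>k\<in>K. (ys k - yv) \<bullet> ?r))"
    using c by (simp add: field_simps)
  also have "\<dots> = (1 / c) * (\<Sum>k\<in>K. vi_gap m l \<theta> A b (xs k) (ys k) u yv)"
    unfolding vi_gap_def by (simp add: sum.distrib sum_subtractf c_def)
  finally show ?thesis unfolding c_def .
qed

section \<open>The block matrices \<open>G\<^sub>1\<close> and \<open>H\<close>\<close>

definition G1_bilin :: "nat \<Rightarrow> real \<Rightarrow> (nat \<Rightarrow> real mat) \<Rightarrow> (nat \<Rightarrow> real mat)
    \<Rightarrow> (nat \<Rightarrow> real vec) \<Rightarrow> (nat \<Rightarrow> real vec) \<Rightarrow> real" where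
  "G1_bilin m \<rho> A P R S = (\<Sum>i\<in>{1..<m}. R i \<bullet> (P i *\<^sub>v S i))
     - \<rho> * (\<Sum>i\<in>{1..<m}. \<Sum>j\<in>{1..<m} - {i}. (A i *\<^sub>v R i) \<bullet> (A j *\<^sub>v S j))"

lemma G1_bilin_cong:
  assumes "\<forall>i\<in>{1..<m}. R i = R' i" "\<forall>i\<in>{1..<m}. S i = S' i"
  shows "G1_bilin m \<rho> A P R S = G1_bilin m \<rho> A P R' S'"
  unfolding G1_bilin_def using assms
  by (intro arg_cong2[where f = "(-)"] arg_cong2[where f = "(*)"] sum.cong refl) auto

lemma sum_off_diagonal_swap:
  fixes f :: "'a \<Rightarrow> 'a \<Rightarrow> real"
  assumes "finite I"
  shows "(\<Sum>i\<in>I. \<Sum>j\<in>I - {i}. f i j) = (\<Sum>i\<in>I. \<Sum>j\<in>I - {i}. f j i)"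
proof -
  have off: "(\<Sum>j\<in>I - {i}. g i j) = (\<Sum>j\<in>I. g i j) - g i i" if "i \<in> I" for g :: "'a \<Rightarrow> 'a \<Rightarrow> real" and i
    using assms that by (simp add: sum_diff1)
  have "(\<Sum>i\<in>I. \<Sum>j\<in>I - {i}. f i j) = (\<Sum>i\<in>I. \<Sum>j\<in>I. f i j) - (\<Sum>i\<in>I. f i i)"
    by (simp add: off sum_subtractf)
  also have "\<dots> = (\<Sum>i\<in>I. \<Sum>j\<in>I. f j i) - (\<Sum>i\<in>I. f i i)" by (subst sum.swap) (rule refl)
  also have "\<dots> = (\<Sum>i\<in>I. \<Sum>j\<in>I - {i}. f j i)"
    by (simp add: off[where g = "\<lambda>i j. f j i"] sum_subtractf)
  finally show ?thesis .
qed

locale block_matrices =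
  fixes m l :: nat and n :: "nat \<Rightarrow> nat" and A P :: "nat \<Rightarrow> real mat"
  assumes A_carrier: "i \<in> {1..<m} \<Longrightarrow> A i \<in> carrier_mat l (n i)"
    and P_carrier: "i \<in> {1..<m} \<Longrightarrow> P i \<in> carrier_mat (n i) (n i)"
    and P_sym: "i \<in> {1..<m} \<Longrightarrow> transpose_mat (P i) = P i"
begin

lemma G1_quad_eq_G1_bilin:
  assumes R: "\<forall>i\<in>{1..<m}. R i \<in> carrier_vec (n i)"
  shows "G1_quad m \<rho> A P R = G1_bilin m \<rho> A P R R"
proof -
  have "R i \<bullet> ((- \<rho>) \<cdot>\<^sub>m (transpose_mat (A i) * A j) *\<^sub>v R j) = - \<rho> * ((A i *\<^sub>v R i) \<bullet> (A j *\<^sub>v R j))"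
    if i: "i \<in> {1..<m}" and j: "j \<in> {1..<m}" for i j
  proof -
    have Ai: "A i \<in> carrier_mat l (n i)" and Aj: "A j \<in> carrier_mat l (n j)" using i j A_carrier by auto
    have "(- \<rho>) \<cdot>\<^sub>m (transpose_mat (A i) * A j) *\<^sub>v R j = (- \<rho>) \<cdot>\<^sub>v (transpose_mat (A i) *\<^sub>v (A j *\<^sub>v R j))"
      using Ai Aj R j by (simp add: mult_mat_vec_smult_mat[of _ "n i" "n j"] assoc_mult_mat_vec[of _ "n i" l])
    thus ?thesis using Ai Aj R i j by (simp add: scalar_prod_transpose_mat[OF Ai])
  qed
  hence "(\<Sum>i\<in>{1..<m}. \<Sum>j\<in>{1..<m} - {i}. R i \<bullet> ((- \<rho>) \<cdot>\<^sub>m (transpose_mat (A i) * A j) *\<^sub>v R j))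
      = - \<rho> * (\<Sum>i\<in>{1..<m}. \<Sum>j\<in>{1..<m} - {i}. (A i *\<^sub>v R i) \<bullet> (A j *\<^sub>v R j))"
    by (simp add: sum_distrib_left)
  thus ?thesis unfolding G1_quad_def G1_bilin_def by simp
qed

lemma G1_bilin_add_left:
  assumes R: "\<forall>i\<in>{1..<m}. R i \<in> carrier_vec (n i)" and S: "\<forall>i\<in>{1..<m}. S i \<in> carrier_vec (n i)"
    and T: "\<forall>i\<in>{1..<m}. T i \<in> carrier_vec (n i)"
  shows "G1_bilin m \<rho> A P (\<lambda>i. R i + S i) T = G1_bilin m \<rho> A P R T + G1_bilin m \<rho> A P S T"
proof -
  have "(R i + S i) \<bullet> (P i *\<^sub>v T i) = R i \<bullet> (P i *\<^sub>v T i) + S i \<bullet> (P i *\<^sub>v T i)"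
    if i: "i \<in> {1..<m}" for i
    using R S T i P_carrier[OF i] by (intro add_scalar_prod_distrib[of _ "n i"]) auto
  moreover have "(A i *\<^sub>v (R i + S i)) \<bullet> (A j *\<^sub>v T j) = (A i *\<^sub>v R i) \<bullet> (A j *\<^sub>v T j) + (A i *\<^sub>v S i) \<bullet> (A j *\<^sub>v T j)"
    if i: "i \<in> {1..<m}" and j: "j \<in> {1..<m}" for i j
    using R S T i j A_carrier[OF i] A_carrier[OF j]
    by (simp add: mult_add_distrib_mat_vec[of _ l "n i"] add_scalar_prod_distrib[of _ l])
  ultimately show ?thesis unfolding G1_bilin_def by (simp add: sum.distrib algebra_simps)
qed

lemma G1_bilin_add_right:
  assumes R: "\<forall>i\<in>{1..<m}. R i \<in> carrier_vec (n i)" and S: "\<forall>i\<in>{1..<m}. S i \<in> carrier_vec (n i)"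
    and T: "\<forall>i\<in>{1..<m}. T i \<in> carrier_vec (n i)"
  shows "G1_bilin m \<rho> A P T (\<lambda>i. R i + S i) = G1_bilin m \<rho> A P T R + G1_bilin m \<rho> A P T S"
proof -
  have "T i \<bullet> (P i *\<^sub>v (R i + S i)) = T i \<bullet> (P i *\<^sub>v R i) + T i \<bullet> (P i *\<^sub>v S i)"
    if i: "i \<in> {1..<m}" for i
    using R S T i P_carrier[OF i]
    by (simp add: mult_add_distrib_mat_vec[of _ "n i"] scalar_prod_add_distrib[of _ "n i"])
  moreover have "(A i *\<^sub>v T i) \<bullet> (A j *\<^sub>v (R j + S j)) = (A i *\<^sub>v T i) \<bullet> (A j *\<^sub>v R j) + (A i *\<^sub>v T i) \<bullet> (A j *\<^sub>v S j)"
    if i: "i \<in> {1..<m}" and j: "j \<in> {1..<m}" for i j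
    using R S T i j A_carrier[OF i] A_carrier[OF j]
    by (simp add: mult_add_distrib_mat_vec[of _ l "n j"] scalar_prod_add_distrib[of _ l])
  ultimately show ?thesis unfolding G1_bilin_def by (simp add: sum.distrib algebra_simps)
qed

lemma G1_bilin_sym:
  assumes R: "\<forall>i\<in>{1..<m}. R i \<in> carrier_vec (n i)" and S: "\<forall>i\<in>{1..<m}. S i \<in> carrier_vec (n i)"
  shows "G1_bilin m \<rho> A P S R = G1_bilin m \<rho> A P R S"
proof -
  have "S i \<bullet> (P i *\<^sub>v R i) = R i \<bullet> (P i *\<^sub>v S i)" if i: "i \<in> {1..<m}" for i
    using R S i by (intro scalar_prod_sym_mat_commute[OF P_carrier[OF i] P_sym[OF i]]) auto
  moreover have "(A i *\<^sub>v S i) \<bullet> (A j *\<^sub>v R j) = (A j *\<^sub>v R j) \<bullet> (A i *\<^sub>v S i)"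
    if i: "i \<in> {1..<m}" and j: "j \<in> {1..<m}" for i j
    using R S i j A_carrier[OF i] A_carrier[OF j] by (intro comm_scalar_prod[of _ l]) auto
  ultimately have "G1_bilin m \<rho> A P S R = (\<Sum>i\<in>{1..<m}. R i \<bullet> (P i *\<^sub>v S i))
      - \<rho> * (\<Sum>i\<in>{1..<m}. \<Sum>j\<in>{1..<m} - {i}. (A j *\<^sub>v R j) \<bullet> (A i *\<^sub>v S i))"
    unfolding G1_bilin_def by simp
  also have "\<dots> = G1_bilin m \<rho> A P R S"
    unfolding G1_bilin_def
    by (subst sum_off_diagonal_swap[where f = "\<lambda>i j. (A i *\<^sub>v R i) \<bullet> (A j *\<^sub>v S j)"]) simp_all
  finally show ?thesis .
qed

lemma G1_bilin_add_add:
  assumes R: "\<forall>i\<in>{1..<m}. R i \<in> carrier_vec (n i)" and S: "\<forall>i\<in>{1..<m}. S i \<in> carrier_vec (n i)"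
  shows "G1_bilin m \<rho> A P (\<lambda>i. R i + S i) (\<lambda>i. R i + S i)
    = G1_bilin m \<rho> A P R R + 2 * G1_bilin m \<rho> A P R S + G1_bilin m \<rho> A P S S"
proof -
  have RS: "\<forall>i\<in>{1..<m}. R i + S i \<in> carrier_vec (n i)" using R S by auto
  show ?thesis
    using G1_bilin_add_left[OF R S RS, of \<rho>] G1_bilin_add_right[OF R S R, of \<rho>]
      G1_bilin_add_right[OF R S S, of \<rho>] G1_bilin_sym[OF R S, of \<rho>] by simp
qed

lemma G1_quad_nonneg:
  assumes G1: "G1_pos_def m n \<rho> A P" and R: "\<forall>i\<in>{1..<m}. R i \<in> carrier_vec (n i)"
  shows "0 \<le> G1_quad m \<rho> A P R"
proof (cases "\<exists>i\<in>{1..<m}. R i \<noteq> 0\<^sub>v (n i)")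
  case True
  thus ?thesis using G1 R unfolding G1_pos_def_def by (meson less_le)
next
  case False
  hence R0: "R i \<bullet> v = 0" if "i \<in> {1..<m}" "v \<in> carrier_vec (n i)" for i v
    using that by auto
  hence "R i \<bullet> (P i *\<^sub>v R i) = 0" "R i \<bullet> (((- \<rho>) \<cdot>\<^sub>m (transpose_mat (A i) * A j)) *\<^sub>v R j) = 0"
    if i: "i \<in> {1..<m}" and j: "j \<in> {1..<m}" for i j
  proof -
    have "(- \<rho>) \<cdot>\<^sub>m (transpose_mat (A i) * A j) \<in> carrier_mat (n i) (n j)"
      using A_carrier[OF i] A_carrier[OF j] by auto
    thus "R i \<bullet> (P i *\<^sub>v R i) = 0" "R i \<bullet> (((- \<rho>) \<cdot>\<^sub>m (transpose_mat (A i) * A j)) *\<^sub>v R j) = 0"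
      using i j R P_carrier[OF i] R0 by auto
  qed
  thus ?thesis unfolding G1_quad_def by simp
qed

end

text \<open>The \<open>(x\<^sub>m, y)\<close> block of \<open>H\<close>, evaluated at \<open>a = A\<^sub>m x\<^sub>m\<close>.\<close>
definition H_tail :: "real \<Rightarrow> real \<Rightarrow> real vec \<Rightarrow> real vec \<Rightarrow> real" where
  "H_tail \<rho> \<gamma> a y = \<rho> / \<gamma> * sqn a + 2 * ((1 - \<gamma>) / \<gamma>) * (a \<bullet> y) + 1 / (\<gamma> * \<rho>) * sqn y"

lemma H_quad_eq:
  fixes A P :: "nat \<Rightarrow> real mat"
  assumes A: "A m \<in> carrier_mat l (n m)" and P: "P m \<in> carrier_mat (n m) (n m)"
    and U: "U m \<in> carrier_vec (n m)" and Y: "Y \<in> carrier_vec l"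
  shows "H_quad m \<rho> \<gamma> A P U Y = G1_quad m \<rho> A P U + quad (P m) (U m) + H_tail \<rho> \<gamma> (A m *\<^sub>v U m) Y"
proof -
  have AU: "A m *\<^sub>v U m \<in> carrier_vec l" using A U by auto
  have "U m \<bullet> ((P m + (\<rho> / \<gamma>) \<cdot>\<^sub>m (transpose_mat (A m) * A m)) *\<^sub>v U m)
      = quad (P m) (U m) + \<rho> / \<gamma> * sqn (A m *\<^sub>v U m)"
    using A P U AU unfolding quad_def sqn_def
    by (simp add: add_mult_distrib_mat_vec[of _ "n m" "n m"] mult_mat_vec_smult_mat[of _ "n m" "n m"]
        assoc_mult_mat_vec[of _ "n m" l] scalar_prod_add_distrib[of _ "n m"] scalar_prod_transpose_mat[OF A])
  moreover have "U m \<bullet> ((((1 - \<gamma>) / \<gamma>) \<cdot>\<^sub>m transpose_mat (A m)) *\<^sub>v Y) = (1 - \<gamma>) / \<gamma> * ((A m *\<^sub>v U m) \<bullet> Y)"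
    using A U Y by (simp add: mult_mat_vec_smult_mat[of _ "n m" l] scalar_prod_transpose_mat[OF A])
  moreover have "Y \<bullet> ((((1 - \<gamma>) / \<gamma>) \<cdot>\<^sub>m A m) *\<^sub>v U m) = (1 - \<gamma>) / \<gamma> * ((A m *\<^sub>v U m) \<bullet> Y)"
    using A U Y AU by (simp add: mult_mat_vec_smult_mat[of _ l "n m"] comm_scalar_prod[of Y l])
  moreover have "Y \<bullet> ((1 / (\<gamma> * \<rho>)) \<cdot>\<^sub>v Y) = 1 / (\<gamma> * \<rho>) * sqn Y"
    unfolding sqn_def by simp
  ultimately show ?thesis unfolding H_quad_def H_tail_def by linarith
qed

lemma H_tail_nonneg:
  assumes "a \<in> carrier_vec l" "y \<in> carrier_vec l" and \<rho>: "\<rho> > 0" and \<gamma>: "0 < \<gamma>" "\<gamma> < 2"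
  shows "0 \<le> H_tail \<rho> \<gamma> a y"
proof -
  have pointwise: "0 \<le> \<rho> / \<gamma> * (a' * a') + 2 * ((1 - \<gamma>) / \<gamma>) * (a' * y') + 1 / (\<gamma> * \<rho>) * (y' * y')" for a' y' :: real
  proof -
    have "\<rho> / \<gamma> * (a' * a') + 2 * ((1 - \<gamma>) / \<gamma>) * (a' * y') + 1 / (\<gamma> * \<rho>) * (y' * y')
       = ((\<rho> * a' + (1 - \<gamma>) * y')\<^sup>2 + \<gamma> * (2 - \<gamma>) * y'\<^sup>2) / (\<gamma> * \<rho>)"
      using \<rho> \<gamma> by (simp add: field_simps power2_eq_square)
    thus ?thesis using \<rho> \<gamma> by simp
  qed
  have "H_tail \<rho> \<gamma> a y = (\<Sum>i<l. \<rho> / \<gamma> * (a $ i * a $ i)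
      + 2 * ((1 - \<gamma>) / \<gamma>) * (a $ i * y $ i) + 1 / (\<gamma> * \<rho>) * (y $ i * y $ i))"
    using assms by (simp add: H_tail_def sqn_eq_sum[of _ l] scalar_prod_eq_sum[of _ l] sum_distrib_left sum.distrib)
  thus ?thesis by (simp only:) (intro sum_nonneg pointwise)
qed

section \<open>One iteration of L-GADMM\<close>

lemma theta_sum_split:
  assumes "m \<ge> 1"
  shows "theta_sum m \<theta> u = (\<Sum>i\<in>{1..<m}. \<theta> i (u i)) + \<theta> m (u m)"
proof -
  have "{1..m} = insert m {1..<m}" using assms by auto
  thus ?thesis unfolding theta_sum_def by simp
qed

text \<open>In block \<open>j < m\<close> the multiplier seen at the new iterate is \<open>ybar\<^sup>k\<close>, corrected by the
  Jacobi-type change \<open>\<Sum>\<^sub>i\<^sub>\<noteq>\<^sub>j A\<^sub>i (x\<^sub>i\<^sup>k\<^sup>+\<^sup>1 - x\<^sub>i\<^sup>k)\<close> of the other blocks.\<close>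
lemma block_residual_eq:
  fixes fa fc :: "nat \<Rightarrow> real vec"
  assumes j: "1 \<le> j" "j < m" and fa: "\<forall>i\<in>{1..m}. fa i \<in> carrier_vec l" and fc: "\<forall>i\<in>{1..m}. fc i \<in> carrier_vec l"
    and b: "b \<in> carrier_vec l" and yk: "yk \<in> carrier_vec l" and \<rho>: "\<rho> \<noteq> 0"
  shows "\<rho> \<cdot>\<^sub>v (fa j + (vsum l fc ({1..m} - {j}) - b - (1 / \<rho>) \<cdot>\<^sub>v yk))
    = - (yk - \<rho> \<cdot>\<^sub>v (vsum l fa {1..<m} + fc m - b)) - \<rho> \<cdot>\<^sub>v vsum l (\<lambda>i. fa i - fc i) ({1..<m} - {j})"
proof (rule eq_vecI)
  fix q assume "q < dim_vec (- (yk - \<rho> \<cdot>\<^sub>v (vsum l fa {1..<m} + fc m - b)) - \<rho> \<cdot>\<^sub>v vsum l (\<lambda>i. fa i - fc i) ({1..<m} - {j}))"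
  hence q: "q < l" using yk by simp
  have "fa j \<in> carrier_vec l" "fc m \<in> carrier_vec l" using fa fc j by auto
  note carrier = this fa fc b yk
  have s1: "{1..m} - {j} = insert m ({1..<m} - {j})" and s2: "{1..<m} = insert j ({1..<m} - {j})"
    using j by auto
  have S1: "(\<Sum>i\<in>{1..m} - {j}. fc i $ q) = fc m $ q + (\<Sum>i\<in>{1..<m} - {j}. fc i $ q)"
    unfolding s1 by (subst sum.insert) auto
  have S2: "(\<Sum>i\<in>{1..<m}. fa i $ q) = fa j $ q + (\<Sum>i\<in>{1..<m} - {j}. fa i $ q)"
    by (subst s2, subst sum.insert) auto
  have S3: "(\<Sum>i\<in>{1..<m} - {j}. (fa i - fc i) $ q)
      = (\<Sum>i\<in>{1..<m} - {j}. fa i $ q) - (\<Sum>i\<in>{1..<m} - {j}. fc i $ q)"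
  proof -
    have "(fa i - fc i) $ q = fa i $ q - fc i $ q" if "i \<in> {1..<m} - {j}" for i
    proof -
      have "fa i \<in> carrier_vec l" "fc i \<in> carrier_vec l" using that fa fc by auto
      thus ?thesis using q by simp
    qed
    thus ?thesis by (simp add: sum_subtractf[symmetric])
  qed
  show "(\<rho> \<cdot>\<^sub>v (fa j + (vsum l fc ({1..m} - {j}) - b - (1 / \<rho>) \<cdot>\<^sub>v yk))) $ q
      = (- (yk - \<rho> \<cdot>\<^sub>v (vsum l fa {1..<m} + fc m - b)) - \<rho> \<cdot>\<^sub>v vsum l (\<lambda>i. fa i - fc i) ({1..<m} - {j})) $ q"
    using q carrier \<rho> by (simp add: S1 S2 S3 field_simps del: One_nat_def)
qed (use fa j b yk in simp)

text \<open>The slack of this inequality is \<open>(2 - \<gamma>) \<rho> / 2 \<parallel>\<Sum>\<^sub>i<m A\<^sub>i x\<^sub>i\<^sup>k\<^sup>+\<^sup>1 + A\<^sub>m x\<^sub>m\<^sup>k - b\<parallel>\<^sup>2\<close>;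
  this is where \<open>\<gamma> < 2\<close> is needed.\<close>
lemma dual_step_ineq_scalar:
  fixes t sa aa ac ae b yk yv yb y1 \<rho> \<gamma> :: real
  assumes \<rho>: "\<rho> > 0" and \<gamma>: "0 < \<gamma>" "\<gamma> < 2"
    and yb: "yb = yk - \<rho> * (sa + ac - b)"
    and y1: "y1 = yk - \<rho> * (\<gamma> * sa + (1 - \<gamma>) * (b - ac) + aa - b)"
  shows "- (yb * t) - y1 * (ae - aa) + yv * (t + (ae - aa)) + (yb - yv) * (sa + t + ae - b)
    \<le> 1 / 2 * ((\<rho> / \<gamma> * ((ae - ac) * (ae - ac)) + 2 * ((1 - \<gamma>) / \<gamma>) * ((ae - ac) * (yv - yk))
          + 1 / (\<gamma> * \<rho>) * ((yv - yk) * (yv - yk)))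
      - (\<rho> / \<gamma> * ((ae - aa) * (ae - aa)) + 2 * ((1 - \<gamma>) / \<gamma>) * ((ae - aa) * (yv - y1))
          + 1 / (\<gamma> * \<rho>) * ((yv - y1) * (yv - y1))))"
proof -
  have "1 / 2 * ((\<rho> / \<gamma> * ((ae - ac) * (ae - ac)) + 2 * ((1 - \<gamma>) / \<gamma>) * ((ae - ac) * (yv - yk))
          + 1 / (\<gamma> * \<rho>) * ((yv - yk) * (yv - yk)))
      - (\<rho> / \<gamma> * ((ae - aa) * (ae - aa)) + 2 * ((1 - \<gamma>) / \<gamma>) * ((ae - aa) * (yv - y1))
          + 1 / (\<gamma> * \<rho>) * ((yv - y1) * (yv - y1))))
     - (- (yb * t) - y1 * (ae - aa) + yv * (t + (ae - aa)) + (yb - yv) * (sa + t + ae - b))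
     = (2 - \<gamma>) * \<rho> / 2 * ((sa + ac - b) * (sa + ac - b))"
    unfolding yb y1 using \<rho> \<gamma> by (simp add: field_simps)
  moreover have "0 \<le> (2 - \<gamma>) * \<rho> / 2 * ((sa + ac - b) * (sa + ac - b))" using \<rho> \<gamma> by simp
  ultimately show ?thesis by linarith
qed

lemma dual_step_ineq:
  fixes T Sa Aa Ac Ae b yk yv yb y1 :: "real vec"
  assumes c: "T \<in> carrier_vec l" "Sa \<in> carrier_vec l" "Aa \<in> carrier_vec l" "Ac \<in> carrier_vec l"
    "Ae \<in> carrier_vec l" "b \<in> carrier_vec l" "yk \<in> carrier_vec l" "yv \<in> carrier_vec l"
    and \<rho>: "\<rho> > 0" and \<gamma>: "0 < \<gamma>" "\<gamma> < 2"
    and yb: "yb = yk - \<rho> \<cdot>\<^sub>v (Sa + Ac - b)"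
    and y1: "y1 = yk - \<rho> \<cdot>\<^sub>v (\<gamma> \<cdot>\<^sub>v Sa + (1 - \<gamma>) \<cdot>\<^sub>v (b - Ac) + Aa - b)"
  shows "- (yb \<bullet> T) - y1 \<bullet> (Ae - Aa) + yv \<bullet> (T + (Ae - Aa)) + (yb - yv) \<bullet> (Sa + T + Ae - b)
    \<le> 1 / 2 * (H_tail \<rho> \<gamma> (Ae - Ac) (yv - yk) - H_tail \<rho> \<gamma> (Ae - Aa) (yv - y1))"
proof -
  have cy: "yb \<in> carrier_vec l" "y1 \<in> carrier_vec l" unfolding yb y1 using c by auto
  have ybi: "yb $ i = yk $ i - \<rho> * (Sa $ i + Ac $ i - b $ i)"
    and y1i: "y1 $ i = yk $ i - \<rho> * (\<gamma> * Sa $ i + (1 - \<gamma>) * (b $ i - Ac $ i) + Aa $ i - b $ i)"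
    if "i < l" for i
    unfolding yb y1 using c that by auto
  note cc = c cy
  have sp: "v \<bullet> w = (\<Sum>i<l. v $ i * w $ i)" if "v \<in> carrier_vec l" "w \<in> carrier_vec l" for v w
    using that by (rule scalar_prod_eq_sum)
  have "- (yb \<bullet> T) - y1 \<bullet> (Ae - Aa) + yv \<bullet> (T + (Ae - Aa)) + (yb - yv) \<bullet> (Sa + T + Ae - b)
      = (\<Sum>i<l. - (yb $ i * T $ i) - y1 $ i * (Ae $ i - Aa $ i) + yv $ i * (T $ i + (Ae $ i - Aa $ i))
          + (yb $ i - yv $ i) * (Sa $ i + T $ i + Ae $ i - b $ i))"
    using cc by (simp add: sp sum.distrib sum_subtractf sum_negf add.assoc)
  also have "\<dots> \<le> (\<Sum>i<l. 1 / 2 * ((\<rho> / \<gamma> * ((Ae $ i - Ac $ i) * (Ae $ i - Ac $ i))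
          + 2 * ((1 - \<gamma>) / \<gamma>) * ((Ae $ i - Ac $ i) * (yv $ i - yk $ i))
          + 1 / (\<gamma> * \<rho>) * ((yv $ i - yk $ i) * (yv $ i - yk $ i)))
        - (\<rho> / \<gamma> * ((Ae $ i - Aa $ i) * (Ae $ i - Aa $ i))
          + 2 * ((1 - \<gamma>) / \<gamma>) * ((Ae $ i - Aa $ i) * (yv $ i - y1 $ i))
          + 1 / (\<gamma> * \<rho>) * ((yv $ i - y1 $ i) * (yv $ i - y1 $ i)))))"
    by (intro sum_mono dual_step_ineq_scalar[OF \<rho> \<gamma>]) (simp_all add: ybi y1i)
  also have "\<dots> = 1 / 2 * (H_tail \<rho> \<gamma> (Ae - Ac) (yv - yk) - H_tail \<rho> \<gamma> (Ae - Aa) (yv - y1))"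
    using cc unfolding H_tail_def sqn_def
    by (simp add: sp sum.distrib sum_subtractf sum_distrib_left sum_divide_distrib[symmetric])
  finally show ?thesis .
qed

locale lgadmm =
  fixes m l :: nat and n :: "nat \<Rightarrow> nat" and \<theta> :: "nat \<Rightarrow> real vec \<Rightarrow> real" and X :: "nat \<Rightarrow> real vec set"
    and A P :: "nat \<Rightarrow> real mat" and b :: "real vec" and \<rho> \<gamma> :: real
    and x :: "nat \<Rightarrow> nat \<Rightarrow> real vec" and y :: "nat \<Rightarrow> real vec"
  assumes m_ge_2: "m \<ge> 2" and rho_pos: "\<rho> > 0" and gamma_pos: "0 < \<gamma>" and gamma_less_2: "\<gamma> < 2"
    and b_carrier: "b \<in> carrier_vec l"
    and theta_convex: "\<forall>i\<in>{1..m}. convex_fun_vec (n i) (\<theta> i)"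
    and X_convex: "\<forall>i\<in>{1..m}. convex_set_vec (n i) (X i)"
    and A_carriers: "\<forall>i\<in>{1..m}. A i \<in> carrier_mat l (n i)"
    and P_pos_def: "\<forall>i\<in>{1..m}. sym_pos_def (n i) (P i)"
    and G1_pos: "G1_pos_def m n \<rho> A P"
    and iteration: "lgadmm_seq m l \<rho> \<gamma> \<theta> X A b P x y"
begin

lemma m_mem: "m \<in> {1..m}"
  using m_ge_2 by auto

lemma A_carrier: "i \<in> {1..m} \<Longrightarrow> A i \<in> carrier_mat l (n i)"
  using A_carriers by auto

lemma P_carrier: "i \<in> {1..m} \<Longrightarrow> P i \<in> carrier_mat (n i) (n i)"
  using P_pos_def unfolding sym_pos_def_def by auto

lemma P_sym: "i \<in> {1..m} \<Longrightarrow> transpose_mat (P i) = P i"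
  using P_pos_def unfolding sym_pos_def_def by auto

lemma quad_P_nonneg:
  assumes i: "i \<in> {1..m}" and v: "v \<in> carrier_vec (n i)"
  shows "0 \<le> quad (P i) v"
proof (cases "v = 0\<^sub>v (n i)")
  case True
  thus ?thesis unfolding quad_def using P_carrier[OF i] by simp
next
  case False
  thus ?thesis using P_pos_def i v unfolding sym_pos_def_def by force
qed

lemma X_carrier: "i \<in> {1..m} \<Longrightarrow> X i \<subseteq> carrier_vec (n i)"
  using X_convex unfolding convex_set_vec_def by auto

lemma argmin_block:
  "j \<in> {1..<m} \<Longrightarrow> is_argmin (X j) (sub_obj m l \<rho> \<theta> A b P (x k) (y k) j) (x (Suc k) j)"
  and argmin_last: "is_argmin (X m) (sub_obj_m m l \<rho> \<gamma> \<theta> A b P (x (Suc k)) (x k m) (y k)) (x (Suc k) m)"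
  and y_Suc: "y (Suc k) = y k - \<rho> \<cdot>\<^sub>v (\<gamma> \<cdot>\<^sub>v vsum l (\<lambda>i. A i *\<^sub>v x (Suc k) i) {1..<m}
      + (1 - \<gamma>) \<cdot>\<^sub>v (b - A m *\<^sub>v x k m) + A m *\<^sub>v x (Suc k) m - b)"
  using iteration unfolding lgadmm_seq_def by auto

lemma x_in_X: "i \<in> {1..m} \<Longrightarrow> x k i \<in> X i"
proof (cases k)
  case 0
  thus "i \<in> {1..m} \<Longrightarrow> x k i \<in> X i" using iteration unfolding lgadmm_seq_def in_W_def by auto
next
  case (Suc k')
  assume i: "i \<in> {1..m}"
  show ?thesis
  proof (cases "i = m")
    case True
    thus ?thesis using argmin_last[of k'] Suc unfolding is_argmin_def by auto
  next
    case False
    hence "i \<in> {1..<m}" using i by auto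
    thus ?thesis using argmin_block[of i k'] Suc unfolding is_argmin_def by auto
  qed
qed

lemma x_carrier: "i \<in> {1..m} \<Longrightarrow> x k i \<in> carrier_vec (n i)"
  using x_in_X X_carrier by blast

lemma y_carrier: "y k \<in> carrier_vec l"
proof (induction k)
  case 0
  thus ?case using iteration unfolding lgadmm_seq_def in_W_def by auto
next
  case (Suc k)
  have "A m *\<^sub>v x k m \<in> carrier_vec l" "A m *\<^sub>v x (Suc k) m \<in> carrier_vec l"
    using A_carrier[OF m_mem] x_carrier[OF m_mem] by auto
  thus ?case using Suc b_carrier unfolding y_Suc[of k] by auto
qed

lemma A_x_carrier: "i \<in> {1..m} \<Longrightarrow> A i *\<^sub>v x k i \<in> carrier_vec l"
  using A_carrier x_carrier by (meson mult_mat_vec_carrier)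

lemma ybar_carrier: "ybar m l \<rho> A b x y k \<in> carrier_vec l"
  unfolding ybar_def using y_carrier A_x_carrier[OF m_mem] b_carrier by simp

sublocale G1: block_matrices m l n A P
  by unfold_locales (auto intro: A_carrier P_carrier P_sym)

lemma H_quad_nonneg:
  assumes U: "\<forall>i\<in>{1..m}. U i \<in> carrier_vec (n i)" and Y: "Y \<in> carrier_vec l"
  shows "0 \<le> H_quad m \<rho> \<gamma> A P U Y"
proof -
  have Um: "U m \<in> carrier_vec (n m)" using U m_mem by auto
  have "0 \<le> G1_quad m \<rho> A P U" using U by (intro G1.G1_quad_nonneg[OF G1_pos]) auto
  moreover have "0 \<le> quad (P m) (U m)" by (rule quad_P_nonneg[OF m_mem Um])
  moreover have "0 \<le> H_tail \<rho> \<gamma> (A m *\<^sub>v U m) Y"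
    using A_carrier[OF m_mem] Um Y rho_pos gamma_pos gamma_less_2 by (intro H_tail_nonneg[of _ l]) auto
  ultimately show ?thesis
    unfolding H_quad_eq[where A = A and P = P and m = m and U = U and n = n and l = l,
        OF A_carrier[OF m_mem] P_carrier[OF m_mem] Um Y] by linarith
qed

lemma block_multiplier_scalar_prod:
  assumes j: "j \<in> {1..<m}" and q: "q \<in> carrier_vec l"
  shows "\<rho> * ((A j *\<^sub>v x (Suc k) j + (vsum l (\<lambda>i. A i *\<^sub>v x k i) ({1..m} - {j}) - b - (1 / \<rho>) \<cdot>\<^sub>v y k)) \<bullet> q)
    = - (ybar m l \<rho> A b x y k \<bullet> q) - \<rho> * (\<Sum>i\<in>{1..<m} - {j}. q \<bullet> (A i *\<^sub>v (x (Suc k) i - x k i)))"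
proof -
  let ?fa = "\<lambda>i. A i *\<^sub>v x (Suc k) i" and ?fc = "\<lambda>i. A i *\<^sub>v x k i"
  let ?v = "vsum l ?fc ({1..m} - {j}) - b - (1 / \<rho>) \<cdot>\<^sub>v y k"
  let ?W = "vsum l (\<lambda>i. ?fa i - ?fc i) ({1..<m} - {j})"
  let ?yb = "ybar m l \<rho> A b x y k"
  have jm: "j \<in> {1..m}" using j by auto
  have fa: "\<forall>i\<in>{1..m}. ?fa i \<in> carrier_vec l" and fc: "\<forall>i\<in>{1..m}. ?fc i \<in> carrier_vec l"
    using A_x_carrier by auto
  have "\<rho> * ((?fa j + ?v) \<bullet> q) = (\<rho> \<cdot>\<^sub>v (?fa j + ?v)) \<bullet> q"
    using fa jm q b_carrier y_carrier[of k] by (simp add: smult_scalar_prod_distrib[of _ l])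
  also have "\<rho> \<cdot>\<^sub>v (?fa j + ?v) = - ?yb - \<rho> \<cdot>\<^sub>v ?W"
    unfolding ybar_def using block_residual_eq[of j m ?fa l ?fc b "y k" \<rho>] j fa fc b_carrier y_carrier rho_pos
    by simp
  also have "(- ?yb - \<rho> \<cdot>\<^sub>v ?W) \<bullet> q = - (?yb \<bullet> q) - \<rho> * (?W \<bullet> q)"
    using ybar_carrier[of k] q by (simp add: minus_scalar_prod_distrib[of _ l] smult_scalar_prod_distrib[of _ l])
  also have "?W \<bullet> q = (\<Sum>i\<in>{1..<m} - {j}. (?fa i - ?fc i) \<bullet> q)"
    using fa fc q by (intro vsum_scalar_prod) auto
  also have "\<dots> = (\<Sum>i\<in>{1..<m} - {j}. q \<bullet> (A i *\<^sub>v (x (Suc k) i - x k i)))"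
  proof (intro sum.cong refl)
    fix i assume "i \<in> {1..<m} - {j}"
    hence i: "i \<in> {1..m}" by auto
    have "A i *\<^sub>v (x (Suc k) i - x k i) = ?fa i - ?fc i"
      using A_carrier[OF i] x_carrier[OF i] by (simp add: mult_minus_distrib_mat_vec[of _ l "n i"])
    thus "(?fa i - ?fc i) \<bullet> q = q \<bullet> (A i *\<^sub>v (x (Suc k) i - x k i))"
      using fa fc i q by (simp add: comm_scalar_prod[of _ l])
  qed
  finally show ?thesis .
qed

lemma vi_block:
  assumes W: "in_W m l X u yv" and j: "j \<in> {1..<m}"
  shows "0 \<le> \<theta> j (u j) - \<theta> j (x (Suc k) j)
     - ybar m l \<rho> A b x y k \<bullet> (A j *\<^sub>v (u j - x (Suc k) j))
     + ((u j - x (Suc k) j) \<bullet> (P j *\<^sub>v (x (Suc k) j - x k j))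
        - \<rho> * (\<Sum>i\<in>{1..<m} - {j}. (A j *\<^sub>v (u j - x (Suc k) j)) \<bullet> (A i *\<^sub>v (x (Suc k) i - x k i))))"
proof -
  have jm: "j \<in> {1..m}" using j by auto
  have uX: "u j \<in> X j" using W jm unfolding in_W_def by auto
  have uc: "u j \<in> carrier_vec (n j)" using uX X_carrier[OF jm] by auto
  let ?a = "x (Suc k)" and ?c = "x k"
  let ?v = "vsum l (\<lambda>i. A i *\<^sub>v ?c i) ({1..m} - {j}) - b - (1 / \<rho>) \<cdot>\<^sub>v y k"
  let ?q = "A j *\<^sub>v (u j - ?a j)"
  have vc: "?v \<in> carrier_vec l" using b_carrier y_carrier by simp
  have ac: "?a j \<in> carrier_vec (n j)" "?c j \<in> carrier_vec (n j)" using x_carrier[OF jm] by auto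
  have "sub_obj m l \<rho> \<theta> A b P (x k) (y k) j z = \<theta> j z + \<rho> / 2 * sqn (A j *\<^sub>v z + ?v) + 1 / 2 * quad (P j) (z - ?c j)"
    if z: "z \<in> X j" for z
  proof -
    have "z \<in> carrier_vec (n j)" using z X_carrier[OF jm] by auto
    hence "A j *\<^sub>v z + vsum l (\<lambda>i. A i *\<^sub>v ?c i) ({1..m} - {j}) - b - (1 / \<rho>) \<cdot>\<^sub>v y k = A j *\<^sub>v z + ?v"
      using A_carrier[OF jm] b_carrier y_carrier[of k] by (intro eq_vecI) auto
    thus ?thesis unfolding sub_obj_def by simp
  qed
  hence "0 \<le> \<theta> j (u j) - \<theta> j (?a j) + \<rho> * ((A j *\<^sub>v ?a j + ?v) \<bullet> ?q) + (?a j - ?c j) \<bullet> (P j *\<^sub>v (u j - ?a j))"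
    by (intro argmin_prox_variational_ineq[OF _ _ A_carrier[OF jm] vc P_carrier[OF jm] P_sym[OF jm] ac(2)
          argmin_block[OF j] _ uX]) (use theta_convex X_convex jm in auto)
  moreover have "?q \<in> carrier_vec l" using A_carrier[OF jm] uc ac by auto
  moreover have "(?a j - ?c j) \<bullet> (P j *\<^sub>v (u j - ?a j)) = (u j - ?a j) \<bullet> (P j *\<^sub>v (?a j - ?c j))"
    using ac uc by (intro scalar_prod_sym_mat_commute[OF P_carrier[OF jm] P_sym[OF jm]]) auto
  ultimately show ?thesis using block_multiplier_scalar_prod[OF j] by simp
qed

lemma vi_last_block:
  assumes W: "in_W m l X u yv"
  shows "0 \<le> \<theta> m (u m) - \<theta> m (x (Suc k) m) - y (Suc k) \<bullet> (A m *\<^sub>v u m - A m *\<^sub>v x (Suc k) m)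
     + (u m - x (Suc k) m) \<bullet> (P m *\<^sub>v (x (Suc k) m - x k m))"
proof -
  have uX: "u m \<in> X m" using W m_mem unfolding in_W_def by auto
  have uc: "u m \<in> carrier_vec (n m)" using uX X_carrier[OF m_mem] by auto
  let ?Sa = "vsum l (\<lambda>i. A i *\<^sub>v x (Suc k) i) {1..<m}"
  let ?Ac = "A m *\<^sub>v x k m" and ?Aa = "A m *\<^sub>v x (Suc k) m"
  let ?v = "\<gamma> \<cdot>\<^sub>v ?Sa + (1 - \<gamma>) \<cdot>\<^sub>v (b - ?Ac) - b - (1 / \<rho>) \<cdot>\<^sub>v y k"
  let ?q = "A m *\<^sub>v (u m - x (Suc k) m)"
  have yk: "y k \<in> carrier_vec l" by (rule y_carrier)
  have Ac: "?Ac \<in> carrier_vec l" "?Aa \<in> carrier_vec l" using A_x_carrier[OF m_mem] by auto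
  have vc: "?v \<in> carrier_vec l" using b_carrier yk Ac by simp
  have ac: "x (Suc k) m \<in> carrier_vec (n m)" "x k m \<in> carrier_vec (n m)" using x_carrier[OF m_mem] by auto
  have qc: "?q \<in> carrier_vec l" using A_carrier[OF m_mem] uc ac by auto
  have "sub_obj_m m l \<rho> \<gamma> \<theta> A b P (x (Suc k)) (x k m) (y k) z
      = \<theta> m z + \<rho> / 2 * sqn (A m *\<^sub>v z + ?v) + 1 / 2 * quad (P m) (z - x k m)"
    if z: "z \<in> X m" for z
  proof -
    have "z \<in> carrier_vec (n m)" using z X_carrier[OF m_mem] by auto
    hence "\<gamma> \<cdot>\<^sub>v ?Sa + (1 - \<gamma>) \<cdot>\<^sub>v (b - ?Ac) + A m *\<^sub>v z - b - (1 / \<rho>) \<cdot>\<^sub>v y k = A m *\<^sub>v z + ?v"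
      using A_carrier[OF m_mem] b_carrier yk Ac by (intro eq_vecI) auto
    thus ?thesis unfolding sub_obj_m_def by simp
  qed
  hence "0 \<le> \<theta> m (u m) - \<theta> m (x (Suc k) m) + \<rho> * ((?Aa + ?v) \<bullet> ?q)
      + (x (Suc k) m - x k m) \<bullet> (P m *\<^sub>v (u m - x (Suc k) m))"
    by (intro argmin_prox_variational_ineq[OF _ _ A_carrier[OF m_mem] vc P_carrier[OF m_mem] P_sym[OF m_mem]
          ac(2) argmin_last _ uX]) (use theta_convex X_convex m_mem in auto)
  moreover have "\<rho> \<cdot>\<^sub>v (?Aa + ?v) = - y (Suc k)"
  proof -
    have "\<rho> \<cdot>\<^sub>v (a + (\<gamma> \<cdot>\<^sub>v s + (1 - \<gamma>) \<cdot>\<^sub>v (b - c) - b - (1 / \<rho>) \<cdot>\<^sub>v y k))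
        = - (y k - \<rho> \<cdot>\<^sub>v (\<gamma> \<cdot>\<^sub>v s + (1 - \<gamma>) \<cdot>\<^sub>v (b - c) + a - b))"
      if "a \<in> carrier_vec l" "s \<in> carrier_vec l" "c \<in> carrier_vec l" for a s c
      using that b_carrier yk rho_pos by (intro eq_vecI) (auto simp: field_simps)
    thus ?thesis unfolding y_Suc[of k] using Ac by simp
  qed
  hence "\<rho> * ((?Aa + ?v) \<bullet> ?q) = - (y (Suc k) \<bullet> ?q)"
    using Ac vc qc y_carrier[of "Suc k"]
    by (simp add: smult_scalar_prod_distrib[of _ l, symmetric]) (metis carrier_vecD scalar_prod_uminus_left)
  moreover have "?q = A m *\<^sub>v u m - ?Aa"
    using A_carrier[OF m_mem] uc ac by (simp add: mult_minus_distrib_mat_vec[of _ l "n m"])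
  moreover have "(x (Suc k) m - x k m) \<bullet> (P m *\<^sub>v (u m - x (Suc k) m))
      = (u m - x (Suc k) m) \<bullet> (P m *\<^sub>v (x (Suc k) m - x k m))"
    using ac uc by (intro scalar_prod_sym_mat_commute[OF P_carrier[OF m_mem] P_sym[OF m_mem]]) auto
  ultimately show ?thesis by simp
qed

lemma sum_vi_blocks:
  assumes W: "in_W m l X u yv"
  shows "0 \<le> (\<Sum>j\<in>{1..<m}. \<theta> j (u j)) - (\<Sum>j\<in>{1..<m}. \<theta> j (x (Suc k) j))
     - ybar m l \<rho> A b x y k \<bullet> vsum l (\<lambda>i. A i *\<^sub>v (u i - x (Suc k) i)) {1..<m}
     + G1_bilin m \<rho> A P (\<lambda>i. u i - x (Suc k) i) (\<lambda>i. x (Suc k) i - x k i)"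
proof -
  let ?yb = "ybar m l \<rho> A b x y k" and ?AE = "\<lambda>i. A i *\<^sub>v (u i - x (Suc k) i)"
  have AE: "?AE i \<in> carrier_vec l" if "i \<in> {1..<m}" for i
  proof -
    have i: "i \<in> {1..m}" using that by auto
    have "u i \<in> carrier_vec (n i)" using W i X_carrier[OF i] unfolding in_W_def by auto
    thus ?thesis using A_carrier[OF i] x_carrier[OF i] by auto
  qed
  have "?yb \<bullet> vsum l ?AE {1..<m} = vsum l ?AE {1..<m} \<bullet> ?yb"
    using ybar_carrier by (intro comm_scalar_prod[of _ l]) auto
  also have "\<dots> = (\<Sum>j\<in>{1..<m}. ?AE j \<bullet> ?yb)"
    using AE ybar_carrier by (intro vsum_scalar_prod) auto
  also have "\<dots> = (\<Sum>j\<in>{1..<m}. ?yb \<bullet> ?AE j)"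
    using AE ybar_carrier by (intro sum.cong refl comm_scalar_prod[of _ l]) auto
  finally have yb_sum: "?yb \<bullet> vsum l ?AE {1..<m} = (\<Sum>j\<in>{1..<m}. ?yb \<bullet> ?AE j)" .
  have "0 \<le> (\<Sum>j\<in>{1..<m}. \<theta> j (u j) - \<theta> j (x (Suc k) j) - ?yb \<bullet> ?AE j
       + ((u j - x (Suc k) j) \<bullet> (P j *\<^sub>v (x (Suc k) j - x k j))
        - \<rho> * (\<Sum>i\<in>{1..<m} - {j}. ?AE j \<bullet> (A i *\<^sub>v (x (Suc k) i - x k i)))))"
    by (intro sum_nonneg vi_block[OF W])
  also have "\<dots> = (\<Sum>j\<in>{1..<m}. \<theta> j (u j)) - (\<Sum>j\<in>{1..<m}. \<theta> j (x (Suc k) j))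
     - ?yb \<bullet> vsum l ?AE {1..<m} + G1_bilin m \<rho> A P (\<lambda>i. u i - x (Suc k) i) (\<lambda>i. x (Suc k) i - x k i)"
    unfolding yb_sum G1_bilin_def by (simp add: sum.distrib sum_subtractf sum_distrib_left)
  finally show ?thesis .
qed

lemma vi_gap_iterate_eq:
  assumes W: "in_W m l X u yv"
  shows "vi_gap m l \<theta> A b (x (Suc k)) (ybar m l \<rho> A b x y k) u yv
    = theta_sum m \<theta> (x (Suc k)) - theta_sum m \<theta> u
      + yv \<bullet> (vsum l (\<lambda>i. A i *\<^sub>v (u i - x (Suc k) i)) {1..<m} + (A m *\<^sub>v u m - A m *\<^sub>v x (Suc k) m))
      + (ybar m l \<rho> A b x y k - yv) \<bullet> (vsum l (\<lambda>i. A i *\<^sub>v x (Suc k) i) {1..<m}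
          + vsum l (\<lambda>i. A i *\<^sub>v (u i - x (Suc k) i)) {1..<m} + A m *\<^sub>v u m - b)"
proof -
  let ?E = "\<lambda>i. u i - x (Suc k) i"
  let ?Sa = "vsum l (\<lambda>i. A i *\<^sub>v x (Suc k) i) {1..<m}" and ?T = "vsum l (\<lambda>i. A i *\<^sub>v ?E i) {1..<m}"
  let ?Aa = "A m *\<^sub>v x (Suc k) m" and ?Ae = "A m *\<^sub>v u m"
  have yv: "yv \<in> carrier_vec l" using W unfolding in_W_def by auto
  have uc: "u i \<in> carrier_vec (n i)" if "i \<in> {1..m}" for i
    using W X_carrier[OF that] that unfolding in_W_def by auto
  have AE: "A i *\<^sub>v ?E i = A i *\<^sub>v u i - A i *\<^sub>v x (Suc k) i" if "i \<in> {1..m}" for i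
    using A_carrier[OF that] uc[OF that] x_carrier[OF that] by (simp add: mult_minus_distrib_mat_vec[of _ l "n i"])
  have AEc: "A i *\<^sub>v ?E i \<in> carrier_vec l" if "i \<in> {1..m}" for i
    using A_carrier[OF that] uc[OF that] x_carrier[OF that] by auto
  have Ac: "?Aa \<in> carrier_vec l" "?Ae \<in> carrier_vec l" using A_x_carrier[OF m_mem] A_carrier[OF m_mem] uc[OF m_mem] by auto
  have sm: "{1..m} = insert m {1..<m}" using m_ge_2 by auto
  have "(\<Sum>i\<in>{1..m}. (x (Suc k) i - u i) \<bullet> - (transpose_mat (A i) *\<^sub>v yv))
      = (\<Sum>i\<in>{1..m}. (A i *\<^sub>v ?E i) \<bullet> yv)"
  proof (intro sum.cong refl)
    fix i assume i: "i \<in> {1..m}"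
    have "(x (Suc k) i - u i) \<bullet> - (transpose_mat (A i) *\<^sub>v yv) = ?E i \<bullet> (transpose_mat (A i) *\<^sub>v yv)"
      using x_carrier[OF i] uc[OF i] A_carrier[OF i] yv by (intro scalar_prod_diff_uminus_swap[of _ "n i"]) auto
    also have "\<dots> = (A i *\<^sub>v ?E i) \<bullet> yv"
      using A_carrier[OF i] x_carrier[OF i] uc[OF i] yv by (intro scalar_prod_transpose_mat) auto
    finally show "(x (Suc k) i - u i) \<bullet> - (transpose_mat (A i) *\<^sub>v yv) = (A i *\<^sub>v ?E i) \<bullet> yv" .
  qed
  also have "\<dots> = ?T \<bullet> yv + (A m *\<^sub>v ?E m) \<bullet> yv"
    unfolding sm using AEc yv by (simp add: vsum_scalar_prod)
  also have "\<dots> = (?T + (?Ae - ?Aa)) \<bullet> yv"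
    using Ac yv unfolding AE[OF m_mem] by (simp add: add_scalar_prod_distrib[of _ l])
  also have "\<dots> = yv \<bullet> (?T + (?Ae - ?Aa))"
    using Ac yv by (intro comm_scalar_prod[of _ l]) auto
  finally have x_part: "(\<Sum>i\<in>{1..m}. (x (Suc k) i - u i) \<bullet> - (transpose_mat (A i) *\<^sub>v yv)) = yv \<bullet> (?T + (?Ae - ?Aa))" .
  have "vsum l (\<lambda>i. A i *\<^sub>v u i) {1..m} = ?Sa + ?T + ?Ae"
  proof (rule eq_vecI)
    fix q assume "q < dim_vec (?Sa + ?T + ?Ae)"
    hence q: "q < l" using A_carrier[OF m_mem] by simp
    have "(A i *\<^sub>v u i) $ q = (A i *\<^sub>v x (Suc k) i) $ q + (A i *\<^sub>v ?E i) $ q" if "i \<in> {1..m}" for i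
      using AE[OF that] A_x_carrier[OF that] A_carrier[OF that] uc[OF that] q by simp
    hence "(\<Sum>i\<in>{1..<m}. (A i *\<^sub>v u i) $ q)
        = (\<Sum>i\<in>{1..<m}. (A i *\<^sub>v x (Suc k) i) $ q) + (\<Sum>i\<in>{1..<m}. (A i *\<^sub>v ?E i) $ q)"
      by (simp add: sum.distrib)
    thus "vsum l (\<lambda>i. A i *\<^sub>v u i) {1..m} $ q = (?Sa + ?T + ?Ae) $ q"
      unfolding sm using q Ac A_carrier[OF m_mem] by simp
  qed (use A_carrier[OF m_mem] in simp)
  thus ?thesis unfolding vi_gap_def x_part by simp
qed

lemma H_quad_prev_eq:
  assumes W: "in_W m l X u yv"
  shows "H_quad m \<rho> \<gamma> A P (\<lambda>i. u i - x k i) (yv - y k)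
    = G1_bilin m \<rho> A P (\<lambda>i. u i - x (Suc k) i) (\<lambda>i. u i - x (Suc k) i)
      + 2 * G1_bilin m \<rho> A P (\<lambda>i. u i - x (Suc k) i) (\<lambda>i. x (Suc k) i - x k i)
      + G1_bilin m \<rho> A P (\<lambda>i. x (Suc k) i - x k i) (\<lambda>i. x (Suc k) i - x k i)
      + (quad (P m) (u m - x (Suc k) m) + 2 * ((u m - x (Suc k) m) \<bullet> (P m *\<^sub>v (x (Suc k) m - x k m)))
        + quad (P m) (x (Suc k) m - x k m))
      + H_tail \<rho> \<gamma> (A m *\<^sub>v u m - A m *\<^sub>v x k m) (yv - y k)"
proof -
  let ?E = "\<lambda>i. u i - x (Suc k) i" and ?D = "\<lambda>i. x (Suc k) i - x k i"
  have yv: "yv \<in> carrier_vec l" using W unfolding in_W_def by auto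
  have uc: "u i \<in> carrier_vec (n i)" if "i \<in> {1..m}" for i
    using W X_carrier[OF that] that unfolding in_W_def by auto
  have split: "u i - x k i = ?E i + ?D i" if "i \<in> {1..m}" for i
    using uc[OF that] x_carrier[OF that, of k] x_carrier[OF that, of "Suc k"] by (intro eq_vecI) auto
  have ED: "\<forall>i\<in>{1..<m}. ?E i \<in> carrier_vec (n i)" "\<forall>i\<in>{1..<m}. ?D i \<in> carrier_vec (n i)"
    using uc x_carrier by auto
  have "G1_quad m \<rho> A P (\<lambda>i. u i - x k i) = G1_bilin m \<rho> A P (\<lambda>i. ?E i + ?D i) (\<lambda>i. ?E i + ?D i)"
    using uc x_carrier split
    by (subst G1.G1_quad_eq_G1_bilin) (auto intro!: G1_bilin_cong)
  moreover have "quad (P m) (u m - x k m) = quad (P m) (?E m) + 2 * (?E m \<bullet> (P m *\<^sub>v ?D m)) + quad (P m) (?D m)"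
    unfolding split[OF m_mem] using uc[OF m_mem] x_carrier[OF m_mem]
    by (intro quad_add[OF P_carrier[OF m_mem] P_sym[OF m_mem]]) auto
  moreover have "A m *\<^sub>v (u m - x k m) = A m *\<^sub>v u m - A m *\<^sub>v x k m"
    using A_carrier[OF m_mem] uc[OF m_mem] x_carrier[OF m_mem] by (simp add: mult_minus_distrib_mat_vec[of _ l "n m"])
  ultimately show ?thesis
    using G1.G1_bilin_add_add[OF ED, of \<rho>] uc[OF m_mem] x_carrier[OF m_mem] yv y_carrier[of k]
    by (subst H_quad_eq[where A = A and P = P and m = m and n = n and l = l, OF A_carrier[OF m_mem] P_carrier[OF m_mem]])
      auto
qed

lemma H_quad_next_eq:
  assumes W: "in_W m l X u yv"
  shows "H_quad m \<rho> \<gamma> A P (\<lambda>i. u i - x (Suc k) i) (yv - y (Suc k))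
    = G1_bilin m \<rho> A P (\<lambda>i. u i - x (Suc k) i) (\<lambda>i. u i - x (Suc k) i)
      + quad (P m) (u m - x (Suc k) m)
      + H_tail \<rho> \<gamma> (A m *\<^sub>v u m - A m *\<^sub>v x (Suc k) m) (yv - y (Suc k))"
proof -
  have yv: "yv \<in> carrier_vec l" using W unfolding in_W_def by auto
  have uc: "u i \<in> carrier_vec (n i)" if "i \<in> {1..m}" for i
    using W X_carrier[OF that] that unfolding in_W_def by auto
  have "G1_quad m \<rho> A P (\<lambda>i. u i - x (Suc k) i) = G1_bilin m \<rho> A P (\<lambda>i. u i - x (Suc k) i) (\<lambda>i. u i - x (Suc k) i)"
    using uc x_carrier by (intro G1.G1_quad_eq_G1_bilin) auto
  moreover have "A m *\<^sub>v (u m - x (Suc k) m) = A m *\<^sub>v u m - A m *\<^sub>v x (Suc k) m"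
    using A_carrier[OF m_mem] uc[OF m_mem] x_carrier[OF m_mem] by (simp add: mult_minus_distrib_mat_vec[of _ l "n m"])
  ultimately show ?thesis
    using uc[OF m_mem] x_carrier[OF m_mem] yv y_carrier[of "Suc k"]
    by (subst H_quad_eq[where A = A and P = P and m = m and n = n and l = l, OF A_carrier[OF m_mem] P_carrier[OF m_mem]])
      auto
qed

lemma one_step_ineq:
  assumes W: "in_W m l X u yv"
  shows "vi_gap m l \<theta> A b (x (Suc k)) (ybar m l \<rho> A b x y k) u yv
    \<le> 1 / 2 * (H_quad m \<rho> \<gamma> A P (\<lambda>i. u i - x k i) (yv - y k)
      - H_quad m \<rho> \<gamma> A P (\<lambda>i. u i - x (Suc k) i) (yv - y (Suc k)))"
proof -
  let ?E = "\<lambda>i. u i - x (Suc k) i" and ?D = "\<lambda>i. x (Suc k) i - x k i"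
  have yv: "yv \<in> carrier_vec l" using W unfolding in_W_def by auto
  have um: "u m \<in> carrier_vec (n m)" using W X_carrier[OF m_mem] m_mem unfolding in_W_def by auto
  have D: "\<forall>i\<in>{1..<m}. ?D i \<in> carrier_vec (n i)" using x_carrier by auto
  have m1: "m \<ge> 1" using m_ge_2 by simp
  have dual: "- (ybar m l \<rho> A b x y k \<bullet> vsum l (\<lambda>i. A i *\<^sub>v ?E i) {1..<m})
      - y (Suc k) \<bullet> (A m *\<^sub>v u m - A m *\<^sub>v x (Suc k) m)
      + yv \<bullet> (vsum l (\<lambda>i. A i *\<^sub>v ?E i) {1..<m} + (A m *\<^sub>v u m - A m *\<^sub>v x (Suc k) m))
      + (ybar m l \<rho> A b x y k - yv) \<bullet> (vsum l (\<lambda>i. A i *\<^sub>v x (Suc k) i) {1..<m}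
          + vsum l (\<lambda>i. A i *\<^sub>v ?E i) {1..<m} + A m *\<^sub>v u m - b)
    \<le> 1 / 2 * (H_tail \<rho> \<gamma> (A m *\<^sub>v u m - A m *\<^sub>v x k m) (yv - y k)
      - H_tail \<rho> \<gamma> (A m *\<^sub>v u m - A m *\<^sub>v x (Suc k) m) (yv - y (Suc k)))"
    using A_x_carrier[OF m_mem] A_carrier[OF m_mem] um b_carrier y_carrier yv rho_pos gamma_pos gamma_less_2
    by (intro dual_step_ineq[of _ l]) (auto simp: ybar_def y_Suc)
  have "vi_gap m l \<theta> A b (x (Suc k)) (ybar m l \<rho> A b x y k) u yv
    \<le> G1_bilin m \<rho> A P ?E ?D + ?E m \<bullet> (P m *\<^sub>v ?D m)
      + 1 / 2 * (H_tail \<rho> \<gamma> (A m *\<^sub>v u m - A m *\<^sub>v x k m) (yv - y k)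
        - H_tail \<rho> \<gamma> (A m *\<^sub>v u m - A m *\<^sub>v x (Suc k) m) (yv - y (Suc k)))"
    using dual sum_vi_blocks[OF W, where k = k] vi_last_block[OF W, where k = k]
    unfolding vi_gap_iterate_eq[OF W, where k = k] theta_sum_split[OF m1] by linarith
  also have "\<dots> \<le> 1 / 2 * (H_quad m \<rho> \<gamma> A P (\<lambda>i. u i - x k i) (yv - y k)
      - H_quad m \<rho> \<gamma> A P ?E (yv - y (Suc k)))"
  proof -
    have "0 \<le> G1_bilin m \<rho> A P ?D ?D"
      using G1.G1_quad_nonneg[OF G1_pos D] G1.G1_quad_eq_G1_bilin[OF D] by simp
    moreover have "0 \<le> quad (P m) (?D m)" using x_carrier[OF m_mem] by (intro quad_P_nonneg[OF m_mem]) auto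
    ultimately show ?thesis
      unfolding H_quad_next_eq[OF W, where k = k] H_quad_prev_eq[OF W, where k = k] ring_distribs
      by linarith
  qed
  finally show ?thesis .
qed

lemma sum_vi_gap_le_H_quad:
  assumes W: "in_W m l X u yv"
  shows "(\<Sum>k\<in>{0..t}. vi_gap m l \<theta> A b (x (Suc k)) (ybar m l \<rho> A b x y k) u yv)
     \<le> 1 / 2 * H_quad m \<rho> \<gamma> A P (\<lambda>i. u i - x 0 i) (yv - y 0)"
proof -
  define h where "h k = H_quad m \<rho> \<gamma> A P (\<lambda>i. u i - x k i) (yv - y k)" for k
  have uc: "\<And>i. i \<in> {1..m} \<Longrightarrow> u i \<in> carrier_vec (n i)" and yv: "yv \<in> carrier_vec l"
    using W X_carrier unfolding in_W_def by blast+
  have "(\<Sum>k\<in>{0..t}. vi_gap m l \<theta> A b (x (Suc k)) (ybar m l \<rho> A b x y k) u yv)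
      \<le> (\<Sum>k\<in>{0..t}. 1 / 2 * (h k - h (Suc k)))"
    unfolding h_def by (intro sum_mono one_step_ineq[OF W])
  also have "\<dots> = 1 / 2 * (h 0 - h (Suc t))"
    by (induction t) (auto simp: algebra_simps)
  also have "\<dots> \<le> 1 / 2 * h 0"
    using H_quad_nonneg[of "\<lambda>i. u i - x (Suc t) i" "yv - y (Suc t)"] uc x_carrier yv y_carrier
    unfolding h_def by auto
  finally show ?thesis unfolding h_def .
qed

end

theorem theorem4p1:
  fixes m l :: nat and n :: "nat \<Rightarrow> nat"
    and \<theta> :: "nat \<Rightarrow> real vec \<Rightarrow> real" and X :: "nat \<Rightarrow> real vec set"
    and A P :: "nat \<Rightarrow> real mat" and b :: "real vec"
    and \<rho> \<gamma> :: real
    and x :: "nat \<Rightarrow> nat \<Rightarrow> real vec" and y :: "nat \<Rightarrow> real vec"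
    and t :: nat
  assumes m2: "m \<ge> 2" and l_pos: "l > 0" and n_pos: "\<forall>i\<in>{1..m}. n i > 0"
    and theta_cvx: "\<forall>i\<in>{1..m}. convex_fun_vec (n i) (\<theta> i)"
    and X_ne: "\<forall>i\<in>{1..m}. X i \<noteq> {}"
    and X_cvx: "\<forall>i\<in>{1..m}. convex_set_vec (n i) (X i)"
    and X_closed: "\<forall>i\<in>{1..m}. closed_set_vec (n i) (X i)"
    and A_rank: "\<forall>i\<in>{1..m}. full_column_rank l (n i) (A i)"
    and b_dim: "b \<in> carrier_vec l"
    and P_sol: "\<exists>us. (\<forall>i\<in>{1..m}. us i \<in> X i) \<and> vsum l (\<lambda>i. A i *\<^sub>v us i) {1..m} = b \<and>
                 (\<forall>u. (\<forall>i\<in>{1..m}. u i \<in> X i) \<and> vsum l (\<lambda>i. A i *\<^sub>v u i) {1..m} = b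
                    \<longrightarrow> theta_sum m \<theta> us \<le> theta_sum m \<theta> u)"
    and Wstar_ne: "\<exists>us ys. in_W m l X us ys \<and>
                 (\<forall>u yv. in_W m l X u yv \<longrightarrow> vi_gap m l \<theta> A b u yv us ys \<ge> 0)"
    and rho_pos: "\<rho> > 0" and gamma: "0 < \<gamma>" "\<gamma> < 2"
    and P_pd: "\<forall>i\<in>{1..m}. sym_pos_def (n i) (P i)"
    and G1_pd: "G1_pos_def m n \<rho> A P"
    and iter: "lgadmm_seq m l \<rho> \<gamma> \<theta> X A b P x y"
    and t_pos: "t > 0"
  shows "in_W m l X (\<lambda>i. (1 / real (t + 1)) \<cdot>\<^sub>v vsum (n i) (\<lambda>k. x (Suc k) i) {0..t})
                     ((1 / real (t + 1)) \<cdot>\<^sub>v vsum l (ybar m l \<rho> A b x y) {0..t})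
       \<and> (\<forall>u yv. in_W m l X u yv \<longrightarrow>
            vi_gap m l \<theta> A b
              (\<lambda>i. (1 / real (t + 1)) \<cdot>\<^sub>v vsum (n i) (\<lambda>k. x (Suc k) i) {0..t})
              ((1 / real (t + 1)) \<cdot>\<^sub>v vsum l (ybar m l \<rho> A b x y) {0..t})
              u yv
            \<le> 1 / (2 * real (t + 1)) * H_quad m \<rho> \<gamma> A P (\<lambda>i. u i - x 0 i) (yv - y 0))"
proof -
  have A_dim: "\<forall>i\<in>{1..m}. A i \<in> carrier_mat l (n i)"
    using A_rank unfolding full_column_rank_def by blast
  interpret lgadmm m l n \<theta> X A P b \<rho> \<gamma> x y
    using m2 rho_pos gamma b_dim theta_cvx X_cvx A_dim P_pd G1_pd iter by unfold_locales
  define xa where "xa = (\<lambda>i. (1 / real (t + 1)) \<cdot>\<^sub>v vsum (n i) (\<lambda>k. x (Suc k) i) {0..t})"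
  define ya where "ya = (1 / real (t + 1)) \<cdot>\<^sub>v vsum l (ybar m l \<rho> A b x y) {0..t}"
  have K: "finite {0..t}" "{0..t} \<noteq> {}" and card: "real (card {0..t}) = real (t + 1)" by auto
  have "in_W m l X xa ya"
    using in_W_average[OF X_cvx K, of l "\<lambda>k. x (Suc k)" "ybar m l \<rho> A b x y"] x_in_X ybar_carrier
    unfolding xa_def ya_def card in_W_def by auto
  moreover have "vi_gap m l \<theta> A b xa ya u yv
      \<le> 1 / (2 * real (t + 1)) * H_quad m \<rho> \<gamma> A P (\<lambda>i. u i - x 0 i) (yv - y 0)"
    if W: "in_W m l X u yv" for u yv
  proof -
    have "vi_gap m l \<theta> A b xa ya u yv
      \<le> 1 / real (t + 1) * (\<Sum>k\<in>{0..t}. vi_gap m l \<theta> A b (x (Suc k)) (ybar m l \<rho> A b x y k) u yv)"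
      using vi_gap_average_le[OF theta_cvx A_dim K, of "\<lambda>k. x (Suc k)" "ybar m l \<rho> A b x y" u yv]
        W X_carrier x_carrier ybar_carrier b_dim unfolding xa_def ya_def card in_W_def by blast
    also have "\<dots> \<le> 1 / real (t + 1) * (1 / 2 * H_quad m \<rho> \<gamma> A P (\<lambda>i. u i - x 0 i) (yv - y 0))"
      by (rule mult_left_mono[OF sum_vi_gap_le_H_quad[OF W]]) simp
    finally show ?thesis by (simp add: mult.commute)
  qed
  ultimately show ?thesis unfolding xa_def ya_def by blast
qed

end
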